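(* Let $b_1,\dots,b_g,c_1,\dots,c_g\in\mathbb{C}$ be such that all the quantities $b_j\pm b_k$, $c_j\pm c_k$ ($j\ne k$), $b_j\pm c_k$ (all $j,k$) that appear below are nonzero. Define, for $j\ne k$, $$C^B_{j,k}=\frac{(b_j-b_k)(c_j-c_k)(b_j+c_k)(c_j+b_k)}{(b_j-c_k)(c_j-b_k)(b_j+b_k)(c_j+c_k)}.$$ Let $\xi_1,\dots,\xi_{2g}\in\mathbb{C}$ and set $w_k=e^{\xi_{2k-1}+\xi_{2k}}\frac{b_k+c_k}{b_k-c_k}$ for $1\le k\le g$. Set $q_{2n-1}=b_n$, $q_{2n}=-c_n$ ($1\le n\le g$), and let $c_{j,k}=-c_{k,j}$ be the constants with $c_{2n-1,2n}=1$ for $1\le n\le g$ and $c_{j,k}=0$ for all other $j<k$. Then $$\sum_{\mathbf m\in\{0,1\}^g}\prod_{j<k}\big(C^B_{j,k}\big)^{m_jm_k}\prod_{k=1}^g w_k^{m_k}=\mathrm{Pf}\Big(c_{j,k}+\frac{q_j-q_k}{q_j+q_k}e^{\xi_j+\xi_k}\Big)_{1\le j,k\le 2g},$$ the Pfaffian of the $2g\times 2g$ skew-symmetric matrix with the displayed entries for $j<k$. (The left side is the Prym $M$-theta function $\tilde\vartheta^B_g(\mathbf z;\tilde\Omega^B)=\sum_{\mathbf m}\exp 2\pi i(\sum_{j<k}m_jm_k\tilde\Omega^B_{j,k}+\sum_k m_kz_k)$ with $e^{2\pi i\tilde\Omega^B_{j,k}}=C^B_{j,k}$ and $2\pi i z_k=\xi_{2k-1}+\xi_{2k}+\ln\frac{b_k+c_k}{b_k-c_k}$.)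 *)

theory Defs
  imports "HOL-Analysis.Analysis" "HOL-Combinatorics.Permutations" "HOL-Library.FuncSet"
begin

definition pfaffian :: "nat \<Rightarrow> (nat \<Rightarrow> nat \<Rightarrow> complex) \<Rightarrow> complex" where
  "pfaffian n A =
     (\<Sum>\<sigma> | \<sigma> permutes {1..2*n}.
        of_int (sign \<sigma>) * (\<Prod>i=1..n. A (\<sigma> (2*i - 1)) (\<sigma> (2*i))))
     / (2 ^ n * fact n)"

definition skew_from_upper :: "(nat \<Rightarrow> nat \<Rightarrow> complex) \<Rightarrow> nat \<Rightarrow> nat \<Rightarrow> complex" where
  "skew_from_upper E j k = (if j < k then E j k else if k < j then - E k j else 0)"

definition cconst :: "nat \<Rightarrow> nat \<Rightarrow> complex" where
  "cconst j k = (if odd j \<and> k = j + 1 then 1 else 0)"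

definition CB :: "(nat \<Rightarrow> complex) \<Rightarrow> (nat \<Rightarrow> complex) \<Rightarrow> nat \<Rightarrow> nat \<Rightarrow> complex" where
  "CB b c j k =
     ((b j - b k) * (c j - c k) * (b j + c k) * (c j + b k)) /
     ((b j - c k) * (c j - b k) * (b j + b k) * (c j + c k))"

definition qseq :: "(nat \<Rightarrow> complex) \<Rightarrow> (nat \<Rightarrow> complex) \<Rightarrow> nat \<Rightarrow> complex" where
  "qseq b c j = (if odd j then b ((j + 1) div 2) else - c (j div 2))"

end

theory Submission
  imports Defs "Jordan_Normal_Form.Determinant" "HOL-Computational_Algebra.Polynomial"
begin

(* The Pfaffian is handled through its expansion along the smallest index, which makes sense on
   any finite index set I.  The constant part c of the matrix pairs 2k-1 with 2k; expanding
   Pf(A + c) along the smallest index shows that it is the sum, over the sets S of such pairs,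
   of the Pfaffians of A with the rows and columns of S deleted.  Here A is of Schur type,
   A_jk = e^(xi_j + xi_k) (q_j - q_k) / (q_j + q_k), so by Schur's Pfaffian identity each of
   these Pfaffians is the product of the e^(xi_j) times the product of the
   (q_j - q_k) / (q_j + q_k) over the remaining j < k.  Grouping the remaining indices into
   pairs {2k-1, 2k}, the factors within a pair give w_k and the four factors between two pairs
   give C^B_jk, so the sum over the complementary sets of pairs is the theta sum. *)

section \<open>Expansion of Pfaffians along the smallest index\<close>

text \<open>The sign with which the pair (a, c) enters the expansion of the Pfaffian on the index set I:
  -1 to the positions of a and c in the ordered set I - {a, c}, times -1 if c precedes a.\<close>
definition pf_sign :: "nat \<Rightarrow> nat \<Rightarrow> nat set \<Rightarrow> complex" where
  "pf_sign a c I =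
     (-1) ^ ((if c < a then 1 else 0) + card {z\<in>I-{a,c}. z<a} + card {z\<in>I-{a,c}. z<c})"

text \<open>The Pfaffian of the principal submatrix of A on I (with card I = 2 * n), expanded along the
  smallest index of I.\<close>
fun pf_expand :: "(nat \<Rightarrow> nat \<Rightarrow> complex) \<Rightarrow> nat \<Rightarrow> nat set \<Rightarrow> complex" where
  "pf_expand A 0 I = 1"
| "pf_expand A (Suc n) I =
     (\<Sum>j\<in>I-{Min I}. pf_sign (Min I) j I * A (Min I) j * pf_expand A n (I - {Min I, j}))"

lemma pf_sign_swap:
  assumes "a \<noteq> c"
  shows "pf_sign c a I = - pf_sign a c I"
proof -
  have "I - {c, a} = I - {a, c}" by auto
  then show ?thesis unfolding pf_sign_def using assms
    by (cases "a < c") (auto simp: algebra_simps)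
qed

lemma pf_sign_Min:
  assumes "finite I" "j \<in> I" "j \<noteq> Min I"
  shows "pf_sign (Min I) j I = (-1) ^ card {z\<in>I-{Min I}. z<j}"
proof -
  have m: "Min I \<le> u" if "u \<in> I" for u using assms that by simp
  have mj: "Min I < j" using m[OF assms(2)] assms(3) by simp
  have e1: "{z\<in>I-{Min I,j}. z<Min I} = {}" using m by force
  have e2: "{z\<in>I-{Min I,j}. z<j} = {z\<in>I-{Min I}. z<j}" by auto
  show ?thesis unfolding pf_sign_def e1 e2 using mj by simp
qed

lemma pf_sign_remove_even:
  assumes "finite I" "U \<subseteq> I - {a, c}" "even (card {z\<in>U. z<a})" "even (card {z\<in>U. z<c})"
  shows "pf_sign a c (I - U) = pf_sign a c I"
proof -
  have cnt: "card {z\<in>I-{a,c}. z<t} = card {z\<in>(I-U)-{a,c}. z<t} + card {z\<in>U. z<t}" for t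
  proof -
    have e: "{z\<in>I-{a,c}. z<t} = {z\<in>(I-U)-{a,c}. z<t} \<union> {z\<in>U. z<t}" using assms(2) by auto
    have "finite U" using assms(1,2) finite_subset by blast
    then show ?thesis unfolding e by (subst card_Un_disjoint) (use assms(1) in auto)
  qed
  show ?thesis unfolding pf_sign_def cnt
    using assms(3,4) by (simp add: algebra_simps power_add)
qed

lemma card_less_insert:
  assumes "finite S" "w \<notin> S"
  shows "card {z\<in>insert w S. z<t} = card {z\<in>S. z<t} + (if w < t then 1 else 0)"
proof (cases "w < t")
  case True
  then have "{z\<in>insert w S. z<t} = insert w {z\<in>S. z<t}" by auto
  then show ?thesis using assms True by simp
next
  case False
  then have "{z\<in>insert w S. z<t} = {z\<in>S. z<t}" by auto
  then show ?thesis using False by simp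
qed

lemma pf_sign_four:
  assumes fin: "finite I" and mem: "i \<in> I" "a \<in> I" "b \<in> I" "d \<in> I"
    and dist: "i \<noteq> a" "i \<noteq> b" "i \<noteq> d" "a \<noteq> b" "a \<noteq> d" "b \<noteq> d"
  shows "pf_sign i b I * pf_sign a d (I - {i, b}) = pf_sign a d I * pf_sign i b (I - {a, d})"
proof -
  define R where "R = I - {i, a, b, d}"
  define K where "K = (\<lambda>t. card {z\<in>R. z<t})"
  define ind where "ind = (\<lambda>x y::nat. if x < y then 1 else (0::nat))"
  have finR: "finite R" unfolding R_def using fin by simp
  have c2: "card {z\<in>insert p (insert r R). z<t} = K t + ind p t + ind r t"
    if "p \<notin> R" "r \<notin> R" "p \<noteq> r" for p r t
  proof -
    have "card {z\<in>insert p (insert r R). z<t} = card {z\<in>insert r R. z<t} + (if p < t then 1 else 0)"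
      by (rule card_less_insert) (use finR that in auto)
    also have "card {z\<in>insert r R. z<t} = card {z\<in>R. z<t} + (if r < t then 1 else 0)"
      by (rule card_less_insert) (use finR that in auto)
    finally show ?thesis unfolding K_def ind_def by simp
  qed
  have nR: "i \<notin> R" "a \<notin> R" "b \<notin> R" "d \<notin> R" unfolding R_def by auto
  have s1: "I - {i, b} - {a, d} = R" "I - {a, d} - {i, b} = R" unfolding R_def by auto
  have s2: "I - {i, b} = insert a (insert d R)" "I - {a, d} = insert i (insert b R)"
    unfolding R_def using mem dist by auto
  have e1: "pf_sign i b I = (-1) ^ (ind b i + (K i + ind a i + ind d i) + (K b + ind a b + ind d b))"
    unfolding pf_sign_def s2(1) using c2[of a d] nR dist by (simp add: ind_def)
  have e2: "pf_sign a d (I - {i, b}) = (-1) ^ (ind d a + K a + K d)"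
    unfolding pf_sign_def s1 K_def ind_def by simp
  have e3: "pf_sign a d I = (-1) ^ (ind d a + (K a + ind i a + ind b a) + (K d + ind i d + ind b d))"
    unfolding pf_sign_def s2(2) using c2[of i b] nR dist by (simp add: ind_def)
  have e4: "pf_sign i b (I - {a, d}) = (-1) ^ (ind b i + K i + K b)"
    unfolding pf_sign_def s1 K_def ind_def by simp
  have "ind a i + ind i a = 1" "ind d i + ind i d = 1" "ind a b + ind b a = 1" "ind d b + ind b d = 1"
    using dist unfolding ind_def by auto
  then have ev: "even ((ind b i + (K i + ind a i + ind d i) + (K b + ind a b + ind d b)) + (ind d a + K a + K d)
            + ((ind d a + (K a + ind i a + ind b a) + (K d + ind i d + ind b d)) + (ind b i + K i + K b)))"
    by presburger
  have parity: "(-1::complex) ^ m = (-1) ^ k" if "even (m + k)" for m k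
    using that by (metis even_add minus_one_power_iff)
  show ?thesis unfolding e1 e2 e3 e4 power_add[symmetric]
    by (rule parity) (use ev in \<open>simp add: algebra_simps\<close>)
qed

lemma pf_sign_strict_mono_image:
  assumes h: "strict_mono (h::nat\<Rightarrow>nat)"
  shows "pf_sign (h a) (h c) (h ` I) = pf_sign a c I"
proof -
  have inj: "inj h" using h by (rule strict_mono_imp_inj_on)
  have s: "{z\<in>h ` I - {h a, h c}. z < h t} = h ` {z\<in>I-{a,c}. z<t}" for t
  proof -
    have "h ` I - {h a, h c} = h ` (I - {a,c})" using inj by (simp add: image_set_diff)
    then show ?thesis by (auto simp: strict_mono_less[OF h])
  qed
  have "card {z\<in>h ` I - {h a, h c}. z < h t} = card {z\<in>I-{a,c}. z<t}" for t
    unfolding s using inj by (simp add: card_image inj_on_subset)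
  then show ?thesis unfolding pf_sign_def using strict_mono_less[OF h] by simp
qed

lemma pf_sign_insert_index:
  assumes "a < N" "b < N - 1"
  shows "pf_sign a (insert_index a b) {..<N} = (-1) ^ (a + b)"
proof (cases "b < a")
  case True
  then have c: "insert_index a b = b" by simp
  have s1: "{z\<in>{..<N}-{a,b}. z<a} = {..<a} - {b}" using assms by auto
  have s2: "{z\<in>{..<N}-{a,b}. z<b} = {..<b}" using True assms by auto
  have "card ({..<a} - {b}) = a - 1" using True by simp
  then show ?thesis unfolding pf_sign_def c s1 s2 using True by (simp add: algebra_simps)
next
  case False
  then have c: "insert_index a b = Suc b" by simp
  have s1: "{z\<in>{..<N}-{a,Suc b}. z<a} = {..<a}" using False assms by auto
  have s2: "{z\<in>{..<N}-{a,Suc b}. z<Suc b} = {..<Suc b} - {a}" using assms by auto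
  have "card ({..<Suc b} - {a}) = b" using False by simp
  then show ?thesis unfolding pf_sign_def c s1 s2 using False by simp
qed

lemma pf_expand_cong_upper:
  assumes "\<And>u v. u < v \<Longrightarrow> A u v = A' u v" and "finite I"
  shows "pf_expand A n I = pf_expand A' n I"
  using assms(2)
proof (induction n arbitrary: I)
  case (Suc n I)
  have "A (Min I) j = A' (Min I) j" if "j \<in> I - {Min I}" for j
    using Suc.prems that by (intro assms(1)) (simp add: order.not_eq_order_implies_strict)
  then show ?case using Suc by (auto intro!: sum.cong)
qed simp

lemma pf_expand_strict_mono_image:
  assumes h: "strict_mono (h::nat\<Rightarrow>nat)" and "finite I"
  shows "pf_expand A n (h ` I) = pf_expand (\<lambda>u v. A (h u) (h v)) n I"
  using assms(2)
proof (induction n arbitrary: I)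
  case (Suc n I)
  have inj: "inj h" using h by (rule strict_mono_imp_inj_on)
  show ?case
  proof (cases "I = {}")
    case False
    define i where "i = Min I"
    have mh: "Min (h ` I) = h i"
      unfolding i_def using Suc.prems False
      by (intro Min_eqI) (auto simp: strict_mono_less_eq[OF h])
    have diff: "h ` I - {h i} = h ` (I - {i})" "h ` I - {h i, h j} = h ` (I - {i, j})" for j
      using inj by (simp_all add: image_set_diff)
    have "pf_expand A (Suc n) (h ` I)
        = (\<Sum>j\<in>I - {i}. pf_sign (h i) (h j) (h ` I) * A (h i) (h j) * pf_expand A n (h ` I - {h i, h j}))"
      by (simp add: mh diff(1) sum.reindex inj_on_subset[OF inj])
    also have "\<dots> = (\<Sum>j\<in>I - {i}. pf_sign i j I * A (h i) (h j) * pf_expand (\<lambda>u v. A (h u) (h v)) n (I - {i, j}))"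
      using Suc by (simp add: diff(2) pf_sign_strict_mono_image[OF h])
    also have "\<dots> = pf_expand (\<lambda>u v. A (h u) (h v)) (Suc n) I"
      by (simp add: i_def)
    finally show ?thesis .
  qed simp
qed simp

lemma sum_off_diagonal_swap:
  fixes F :: "'a \<Rightarrow> 'a \<Rightarrow> 'b::comm_monoid_add"
  assumes "finite W"
  shows "(\<Sum>x\<in>W. \<Sum>y\<in>W-{x}. F x y) = (\<Sum>y\<in>W. \<Sum>x\<in>W-{y}. F x y)"
proof -
  have row: "(\<Sum>y\<in>W-{x}. F x y) = (\<Sum>y\<in>W. if y \<noteq> x then F x y else 0)" for x
  proof -
    have "W - {x} = {y\<in>W. y \<noteq> x}" by auto
    then show ?thesis by (simp add: sum.inter_filter[OF assms])
  qed
  have col: "(\<Sum>x\<in>W-{y}. F x y) = (\<Sum>x\<in>W. if y \<noteq> x then F x y else 0)" for y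
  proof -
    have "W - {y} = {x\<in>W. y \<noteq> x}" by auto
    then show ?thesis by (simp add: sum.inter_filter[OF assms])
  qed
  show ?thesis unfolding row col by (rule sum.swap)
qed

lemma pf_sign_double_sum_exchange:
  assumes "finite I" "i \<in> I" "a \<in> I" "i \<noteq> a"
  shows "(\<Sum>b\<in>I-{i,a}. \<Sum>d\<in>I-{i,a}-{b}. pf_sign i b I * pf_sign a d (I - {i,b}) * F b d)
       = (\<Sum>c\<in>I-{i,a}. \<Sum>d\<in>I-{i,a}-{c}. pf_sign a c I * pf_sign i d (I - {a,c}) * F d c)"
proof -
  have "(\<Sum>b\<in>I-{i,a}. \<Sum>d\<in>I-{i,a}-{b}. pf_sign i b I * pf_sign a d (I - {i,b}) * F b d)
      = (\<Sum>b\<in>I-{i,a}. \<Sum>d\<in>I-{i,a}-{b}. pf_sign a d I * pf_sign i b (I - {a,d}) * F b d)"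
  proof (intro sum.cong refl)
    fix b d assume "b \<in> I - {i, a}" "d \<in> I - {i, a} - {b}"
    with assms show "pf_sign i b I * pf_sign a d (I - {i,b}) * F b d
        = pf_sign a d I * pf_sign i b (I - {a,d}) * F b d"
      by (subst pf_sign_four) auto
  qed
  also have "\<dots> = (\<Sum>d\<in>I-{i,a}. \<Sum>b\<in>I-{i,a}-{d}. pf_sign a d I * pf_sign i b (I - {a,d}) * F b d)"
    using assms(1) by (intro sum_off_diagonal_swap) simp
  finally show ?thesis .
qed

lemma pf_expand_exchange_rows:
  assumes "finite I" "i = Min I" "a \<in> I" "a \<noteq> i"
    and row_a: "\<And>b. b \<in> I - {i,a} \<Longrightarrow> pf_expand A (Suc m) (I - {i,b})
          = (\<Sum>d\<in>I-{i,b}-{a}. pf_sign a d (I - {i,b}) * A a d * pf_expand A m (I - {i,b} - {a,d}))"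
  shows "(\<Sum>b\<in>I-{i,a}. pf_sign i b I * A i b * pf_expand A (Suc m) (I - {i,b}))
       = (\<Sum>c\<in>I-{i,a}. pf_sign a c I * A a c * pf_expand A (Suc m) (I - {a,c}))"
proof -
  define W where "W = I - {i, a}"
  define F where "F = (\<lambda>b d. A i b * A a d * pf_expand A m (W - {b,d}))"
  have iI: "i \<in> I" and imin: "\<And>u. u \<in> I \<Longrightarrow> i \<le> u"
    using assms(1-3) by (auto intro: Min_in)
  have expand_a: "pf_expand A (Suc m) (I - {i,b})
      = (\<Sum>d\<in>W-{b}. pf_sign a d (I - {i,b}) * A a d * pf_expand A m (W - {b,d}))"
    if "b \<in> W" for b
  proof -
    have "I - {i,b} - {a} = W - {b}" "\<And>d. I - {i,b} - {a,d} = W - {b,d}"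
      unfolding W_def by auto
    then show ?thesis using row_a[of b] that unfolding W_def by (simp del: pf_expand.simps)
  qed
  have expand_i: "pf_expand A (Suc m) (I - {a,c})
      = (\<Sum>d\<in>W-{c}. pf_sign i d (I - {a,c}) * A i d * pf_expand A m (W - {d,c}))"
    if "c \<in> W" for c
  proof -
    have "Min (I - {a,c}) = i"
      using that assms(1,4) iI imin unfolding W_def by (intro Min_eqI) auto
    moreover have "I - {a,c} - {i} = W - {c}" "\<And>d. I - {a,c} - {i,d} = W - {d,c}"
      unfolding W_def by auto
    ultimately show ?thesis by simp
  qed
  have "(\<Sum>b\<in>W. pf_sign i b I * A i b * pf_expand A (Suc m) (I - {i,b}))
      = (\<Sum>b\<in>W. \<Sum>d\<in>W-{b}. pf_sign i b I * pf_sign a d (I - {i,b}) * F b d)"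
    by (rule sum.cong[OF refl]) (simp add: expand_a F_def sum_distrib_left algebra_simps del: pf_expand.simps)
  also have "\<dots> = (\<Sum>c\<in>W. \<Sum>d\<in>W-{c}. pf_sign a c I * pf_sign i d (I - {a,c}) * F d c)"
    unfolding W_def by (rule pf_sign_double_sum_exchange) (use assms iI in auto)
  also have "\<dots> = (\<Sum>c\<in>W. pf_sign a c I * A a c * pf_expand A (Suc m) (I - {a,c}))"
    by (rule sum.cong[OF refl]) (simp add: expand_i F_def sum_distrib_left algebra_simps del: pf_expand.simps)
  finally show ?thesis unfolding W_def .
qed

lemma pf_expand_row:
  assumes skew: "\<And>u v. A u v = - A v u"
    and "finite I" "card I = 2 * Suc n" "a \<in> I"
  shows "pf_expand A (Suc n) I = (\<Sum>c\<in>I-{a}. pf_sign a c I * A a c * pf_expand A n (I - {a,c}))"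
  using assms(2-4)
proof (induction n arbitrary: I a rule: less_induct)
  case (less n I a)
  define i where "i = Min I"
  have iI: "i \<in> I" unfolding i_def using less.prems by (intro Min_in) auto
  show ?case
  proof (cases "a = i")
    case True
    then show ?thesis by (simp add: i_def)
  next
    case False
    define W where "W = I - {i, a}"
    have finW: "finite W" and cW: "card W = 2 * n"
      unfolding W_def using less.prems iI False by (auto simp: card_Diff_subset)
    have split_i: "pf_expand A (Suc n) I = pf_sign i a I * A i a * pf_expand A n (I - {i,a})
                 + (\<Sum>b\<in>W. pf_sign i b I * A i b * pf_expand A n (I - {i,b}))"
    proof -
      have "I - {i} - {a} = W" unfolding W_def by auto
      then show ?thesis
        using less.prems False by (simp add: i_def[symmetric] sum.remove[of "I-{i}" a])
    qed
    have split_a: "(\<Sum>c\<in>I-{a}. pf_sign a c I * A a c * pf_expand A n (I - {a,c}))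
                 = pf_sign a i I * A a i * pf_expand A n (I - {a,i})
                 + (\<Sum>c\<in>W. pf_sign a c I * A a c * pf_expand A n (I - {a,c}))"
    proof -
      have "I - {a} - {i} = W" unfolding W_def by auto
      then show ?thesis using less.prems iI False by (simp add: sum.remove[of "I-{a}" i])
    qed
    have diagonal: "pf_sign i a I * A i a * pf_expand A n (I - {i,a})
                  = pf_sign a i I * A a i * pf_expand A n (I - {a,i})"
      using pf_sign_swap[of i a I] skew[of a i] False by (simp add: insert_commute)
    have rest: "(\<Sum>b\<in>W. pf_sign i b I * A i b * pf_expand A n (I - {i,b}))
              = (\<Sum>c\<in>W. pf_sign a c I * A a c * pf_expand A n (I - {a,c}))"
    proof (cases n)
      case 0
      then show ?thesis using finW cW by simp
    next
      case (Suc m)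
      have row: "pf_expand A (Suc m) (I - {i,b})
          = (\<Sum>d\<in>I-{i,b}-{a}. pf_sign a d (I - {i,b}) * A a d * pf_expand A m (I - {i,b} - {a,d}))"
        if "b \<in> I - {i,a}" for b
      proof (rule less.IH)
        show "card (I - {i,b}) = 2 * Suc m" "a \<in> I - {i,b}"
          using that less.prems iI False Suc by (auto simp: card_Diff_subset)
      qed (use less.prems Suc in simp_all)
      show ?thesis unfolding W_def Suc
        by (rule pf_expand_exchange_rows[OF _ _ _ _ row]) (use less.prems False in \<open>simp_all add: i_def\<close>)
    qed
    show ?thesis unfolding split_i split_a diagonal rest ..
  qed
qed

text \<open>The permutation formula without the normalising factor and on the index set {0..<2*n}, the
  form on which the insertion operations of Jordan_Normal_Form.Determinant act.\<close>
definition pf_perm_sum :: "nat \<Rightarrow> (nat \<Rightarrow> nat \<Rightarrow> complex) \<Rightarrow> complex" where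
  "pf_perm_sum n A =
     (\<Sum>\<sigma> | \<sigma> permutes {0..<2*n}. of_int (sign \<sigma>) * (\<Prod>k<n. A (\<sigma> (2*k)) (\<sigma> (2*k+1))))"

lemma sum_permutes_Suc:
  fixes F :: "(nat \<Rightarrow> nat) \<Rightarrow> complex"
  shows "(\<Sum>\<sigma> | \<sigma> permutes {0..<Suc N}. F \<sigma>)
       = (\<Sum>a<Suc N. \<Sum>q | q permutes {0..<N}. F (permutation_insert 0 a q))"
proof -
  define T where "T = (\<lambda>a. permutation_insert 0 a ` {q. q permutes {0..<N}})"
  have "{\<sigma>. \<sigma> permutes {0..<Suc N}} = (\<Union>a\<in>{..<Suc N}. T a)"
  proof (intro equalityI subsetI)
    fix \<sigma> assume "\<sigma> \<in> {\<sigma>. \<sigma> permutes {0..<Suc N}}"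
    then have p: "\<sigma> permutes {0..<Suc N}" by simp
    then have a: "\<sigma> 0 < Suc N" using permutes_in_image[OF p, of 0] by simp
    then have "\<sigma> \<in> T (\<sigma> 0)" unfolding T_def using permutation_fix[of 0 N "\<sigma> 0"] p by auto
    then show "\<sigma> \<in> (\<Union>a\<in>{..<Suc N}. T a)" using a by auto
  next
    fix \<sigma> assume "\<sigma> \<in> (\<Union>a\<in>{..<Suc N}. T a)"
    then obtain a where "a < Suc N" "\<sigma> \<in> T a" by auto
    then show "\<sigma> \<in> {\<sigma>. \<sigma> permutes {0..<Suc N}}"
      unfolding T_def using permutation_fix[of 0 N a] by auto
  qed
  then have "(\<Sum>\<sigma> | \<sigma> permutes {0..<Suc N}. F \<sigma>) = (\<Sum>a<Suc N. \<Sum>\<sigma>\<in>T a. F \<sigma>)"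
    by (simp only:) (rule sum.UNION_disjoint,
        auto simp: T_def finite_permutations, metis permutation_insert_inserted)
  also have "\<dots> = (\<Sum>a<Suc N. \<Sum>q | q permutes {0..<N}. F (permutation_insert 0 a q))"
    unfolding T_def by (intro sum.cong refl sum.reindex[unfolded comp_def] permutation_insert_inj_on) auto
  finally show ?thesis .
qed

lemma pf_perm_sum_Suc:
  "pf_perm_sum (Suc n) A = (\<Sum>a<Suc (Suc (2*n)). \<Sum>b<Suc (2*n). (-1)^(a+b) * A a (insert_index a b) *
      pf_perm_sum n (\<lambda>u v. A (insert_index a (insert_index b u)) (insert_index a (insert_index b v))))"
proof -
  define F where "F = (\<lambda>\<sigma>. of_int (sign \<sigma>) * (\<Prod>k<Suc n. A (\<sigma> (2*k)) (\<sigma> (2*k+1))) :: complex)"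
  have "pf_perm_sum (Suc n) A = (\<Sum>a<Suc (Suc (2*n)). \<Sum>b<Suc (2*n). \<Sum>r | r permutes {0..<2*n}.
                     F (permutation_insert 0 a (permutation_insert 0 b r)))"
    unfolding pf_perm_sum_def F_def by (simp add: sum_permutes_Suc)
  also have "\<dots> = (\<Sum>a<Suc (Suc (2*n)). \<Sum>b<Suc (2*n). (-1)^(a+b) * A a (insert_index a b) *
      pf_perm_sum n (\<lambda>u v. A (insert_index a (insert_index b u)) (insert_index a (insert_index b v))))"
  proof (intro sum.cong refl)
    fix a b assume a: "a \<in> {..<Suc (Suc (2*n))}" and b: "b \<in> {..<Suc (2*n)}"
    define h where "h = (\<lambda>u. insert_index a (insert_index b u))"
    have insert_0: "permutation_insert 0 c q x = (if x = 0 then c else insert_index c (q (x - 1)))"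
      for c x :: nat and q :: "nat \<Rightarrow> nat" unfolding permutation_insert_expand by auto
    have "F (permutation_insert 0 a (permutation_insert 0 b r))
        = (-1)^(a+b) * A a (insert_index a b) * (of_int (sign r) * (\<Prod>k<n. A (h (r (2*k))) (h (r (2*k+1)))))"
      if r: "r permutes {0..<2*n}" for r
    proof -
      have q: "permutation_insert 0 b r permutes {0..<Suc (2*n)}"
        using permutation_insert_permutes[OF r, of 0 b] b by simp
      have "(signof (permutation_insert 0 b r) :: complex) = (-1)^b * signof r"
        using signof_permutation_insert[OF r, of 0 b] b by simp
      moreover have "(signof (permutation_insert 0 a (permutation_insert 0 b r)) :: complex)
          = (-1)^a * signof (permutation_insert 0 b r)"
        using signof_permutation_insert[OF q, of 0 a] a by simp
      ultimately have "(signof (permutation_insert 0 a (permutation_insert 0 b r)) :: complex)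
          = (-1)^(a+b) * signof r"
        by (simp add: power_add)
      moreover have "(\<Prod>k<Suc n. A (permutation_insert 0 a (permutation_insert 0 b r) (2*k))
                                  (permutation_insert 0 a (permutation_insert 0 b r) (2*k+1)))
             = A a (insert_index a b) * (\<Prod>k<n. A (h (r (2*k))) (h (r (2*k+1))))"
        unfolding prod.lessThan_Suc_shift by (simp add: insert_0 h_def)
      ultimately show ?thesis unfolding F_def by (simp add: algebra_simps)
    qed
    then have "(\<Sum>r | r permutes {0..<2*n}. F (permutation_insert 0 a (permutation_insert 0 b r)))
        = (\<Sum>r | r permutes {0..<2*n}. (-1)^(a+b) * A a (insert_index a b) *
            (of_int (sign r) * (\<Prod>k<n. A (h (r (2*k))) (h (r (2*k+1))))))"
      by (intro sum.cong) auto
    then show "(\<Sum>r | r permutes {0..<2*n}. F (permutation_insert 0 a (permutation_insert 0 b r)))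
        = (-1)^(a+b) * A a (insert_index a b) *
          pf_perm_sum n (\<lambda>u v. A (insert_index a (insert_index b u)) (insert_index a (insert_index b v)))"
      unfolding pf_perm_sum_def h_def by (simp add: sum_distrib_left)
  qed
  finally show ?thesis .
qed

lemma sum_insert_index_row:
  assumes a: "a < Suc (Suc N)"
  shows "(\<Sum>b<Suc N. (-1)^(a+b) * A a (insert_index a b) *
            pf_expand (\<lambda>u v. A (insert_index a (insert_index b u)) (insert_index a (insert_index b v))) n {..<N})
       = (\<Sum>c\<in>{..<Suc (Suc N)}-{a}.
            pf_sign a c {..<Suc (Suc N)} * A a c * pf_expand A n ({..<Suc (Suc N)} - {a,c}))"
proof -
  define I where "I = {..<Suc (Suc N)}"
  have inj: "inj (insert_index c)" for c by (rule insert_index_inj_on)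
  have row_a: "insert_index a ` {..<Suc N} = I - {a}"
    using insert_index_image[OF a] by (simp add: I_def atLeast0LessThan)
  have summand: "(-1)^(a+b) * A a (insert_index a b) *
          pf_expand (\<lambda>u v. A (insert_index a (insert_index b u)) (insert_index a (insert_index b v))) n {..<N}
      = pf_sign a (insert_index a b) I * A a (insert_index a b) * pf_expand A n (I - {a, insert_index a b})"
    if b: "b < Suc N" for b
  proof -
    define h where "h = (\<lambda>u. insert_index a (insert_index b u))"
    have mono: "strict_mono h" unfolding h_def strict_mono_def insert_index_def by auto
    have "insert_index b ` {..<N} = {..<Suc N} - {b}"
      using insert_index_image[OF b] by (simp add: atLeast0LessThan)
    then have "h ` {..<N} = I - {a, insert_index a b}"
      unfolding h_def image_image[of "insert_index a" "insert_index b", symmetric]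
      using row_a by (auto simp: image_set_diff[OF inj])
    then show ?thesis
      using pf_expand_strict_mono_image[OF mono, of "{..<N}" A n] pf_sign_insert_index[of a "Suc (Suc N)" b] a b
      unfolding h_def I_def by simp
  qed
  have "(\<Sum>b<Suc N. (-1)^(a+b) * A a (insert_index a b) *
            pf_expand (\<lambda>u v. A (insert_index a (insert_index b u)) (insert_index a (insert_index b v))) n {..<N})
      = (\<Sum>b<Suc N. pf_sign a (insert_index a b) I * A a (insert_index a b) * pf_expand A n (I - {a, insert_index a b}))"
    using summand by (intro sum.cong) auto
  also have "\<dots> = (\<Sum>c\<in>insert_index a ` {..<Suc N}. pf_sign a c I * A a c * pf_expand A n (I - {a,c}))"
    by (simp add: sum.reindex[OF insert_index_inj_on])
  finally show ?thesis unfolding row_a I_def .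
qed

text \<open>In the recursion for pf_perm_sum, the summand of each first index a is the expansion
  along row a, which by pf_expand_row is the whole Pfaffian; this gives the factor 2 * (n + 1).\<close>
lemma pf_perm_sum_eq_pf_expand:
  assumes "\<And>u v. A u v = - A v u"
  shows "pf_perm_sum n A = 2^n * fact n * pf_expand A n {..<2*n}"
  using assms
proof (induction n arbitrary: A)
  case 0
  have "{\<sigma>::nat\<Rightarrow>nat. \<sigma> permutes {0..<2*(0::nat)}} = {id}" by simp
  then show ?case by (simp add: pf_perm_sum_def)
next
  case (Suc n A)
  define I where "I = {..<Suc (Suc (2*n))}"
  have IH: "pf_perm_sum n (\<lambda>u v. A (h u) (h v)) = 2^n * fact n * pf_expand (\<lambda>u v. A (h u) (h v)) n {..<2*n}"
    for h by (rule Suc.IH) (rule Suc.prems)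
  have "pf_perm_sum (Suc n) A = (\<Sum>a\<in>I. 2^n * fact n * (\<Sum>b<Suc (2*n). (-1)^(a+b) * A a (insert_index a b) *
      pf_expand (\<lambda>u v. A (insert_index a (insert_index b u)) (insert_index a (insert_index b v))) n {..<2*n}))"
    unfolding pf_perm_sum_Suc I_def IH by (simp add: sum_distrib_left algebra_simps)
  also have "\<dots> = (\<Sum>a\<in>I. 2^n * fact n * pf_expand A (Suc n) I)"
  proof (rule sum.cong[OF refl])
    fix a assume a: "a \<in> I"
    have row: "pf_expand A (Suc n) I = (\<Sum>c\<in>I-{a}. pf_sign a c I * A a c * pf_expand A n (I - {a,c}))"
      by (rule pf_expand_row[where A = A, OF Suc.prems]) (use a in \<open>auto simp: I_def\<close>)
    show "2^n * fact n * (\<Sum>b<Suc (2*n). (-1)^(a+b) * A a (insert_index a b) *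
        pf_expand (\<lambda>u v. A (insert_index a (insert_index b u)) (insert_index a (insert_index b v))) n {..<2*n})
      = 2^n * fact n * pf_expand A (Suc n) I"
      unfolding row unfolding I_def sum_insert_index_row[OF a[unfolded I_def lessThan_iff]] ..
  qed
  also have "\<dots> = 2^Suc n * fact (Suc n) * pf_expand A (Suc n) I"
    by (simp add: I_def algebra_simps)
  finally show ?case by (simp add: I_def)
qed

lemma pfaffian_sum_shift:
  "(\<Sum>\<sigma> | \<sigma> permutes {1..2*n}. of_int (sign \<sigma>) * (\<Prod>i=1..n. A (\<sigma> (2*i - 1)) (\<sigma> (2*i))))
   = pf_perm_sum n (\<lambda>u v. A (Suc u) (Suc v))"
proof -
  define N where "N = 2*n"
  define shift where "shift = map_permutation {0..<N} Suc"
  have bij: "bij_betw Suc {0..<N} {1..N}" by (simp add: atLeastLessThanSuc_atLeastAtMost)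
  have bij': "bij_betw (\<lambda>x. x - 1) {1..N} {0..<N}"
    by (rule bij_betw_byWitness[where f' = Suc]) auto
  have "bij_betw shift {\<tau>. \<tau> permutes {0..<N}} {\<sigma>. \<sigma> permutes {1..N}}"
    unfolding shift_def
  proof (rule bij_betw_byWitness[where f' = "map_permutation {1..N} (\<lambda>x. x - 1)"])
    show "\<forall>\<tau>\<in>{\<tau>. \<tau> permutes {0..<N}}. map_permutation {1..N} (\<lambda>x. x - 1) (map_permutation {0..<N} Suc \<tau>) = \<tau>"
      using map_permutation_compose_inv[OF bij] by simp
    show "\<forall>\<sigma>\<in>{\<sigma>. \<sigma> permutes {1..N}}. map_permutation {0..<N} Suc (map_permutation {1..N} (\<lambda>x. x - 1) \<sigma>) = \<sigma>"
      using map_permutation_compose_inv[OF bij'] by simp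
    show "map_permutation {0..<N} Suc ` {\<tau>. \<tau> permutes {0..<N}} \<subseteq> {\<sigma>. \<sigma> permutes {1..N}}"
      using map_permutation_permutes[OF bij] by auto
    show "map_permutation {1..N} (\<lambda>x. x - 1) ` {\<sigma>. \<sigma> permutes {1..N}} \<subseteq> {\<tau>. \<tau> permutes {0..<N}}"
      using map_permutation_permutes[OF bij'] by auto
  qed
  then have "(\<Sum>\<sigma> | \<sigma> permutes {1..N}. of_int (sign \<sigma>) * (\<Prod>i=1..n. A (\<sigma> (2*i - 1)) (\<sigma> (2*i))))
      = (\<Sum>\<tau> | \<tau> permutes {0..<N}. of_int (sign (shift \<tau>)) * (\<Prod>i=1..n. A (shift \<tau> (2*i - 1)) (shift \<tau> (2*i))))"
    by (rule sum.reindex_bij_betw[symmetric])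
  also have "\<dots> = pf_perm_sum n (\<lambda>u v. A (Suc u) (Suc v))"
    unfolding pf_perm_sum_def N_def[symmetric]
  proof (rule sum.cong[OF refl])
    fix \<tau> assume "\<tau> \<in> {\<tau>. \<tau> permutes {0..<N}}"
    then have \<tau>: "\<tau> permutes {0..<N}" by simp
    have "sign (shift \<tau>) = sign \<tau>"
      unfolding shift_def by (rule sign_map_permutation) (use \<tau> in auto)
    moreover have shift_Suc: "shift \<tau> (Suc x) = Suc (\<tau> x)" if "x < N" for x
      unfolding shift_def by (rule map_permutation_apply) (use that in auto)
    moreover have "2 * k < N" "Suc (2 * k) < N" if "k < n" for k using that by (auto simp: N_def)
    ultimately show "of_int (sign (shift \<tau>)) * (\<Prod>i=1..n. A (shift \<tau> (2*i - 1)) (shift \<tau> (2*i)))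
        = of_int (sign \<tau>) * (\<Prod>k<n. A (Suc (\<tau> (2*k))) (Suc (\<tau> (2*k+1))))"
      by (simp add: prod.atLeast1_atMost_eq[where n = n, simplified])
  qed
  finally show ?thesis by (simp add: N_def)
qed

lemma pfaffian_eq_pf_expand:
  assumes "\<And>u v. A u v = - A v u"
  shows "pfaffian n A = pf_expand A n {1..2*n}"
proof -
  have "pf_perm_sum n (\<lambda>u v. A (Suc u) (Suc v)) = 2^n * fact n * pf_expand (\<lambda>u v. A (Suc u) (Suc v)) n {..<2*n}"
    by (rule pf_perm_sum_eq_pf_expand) (rule assms)
  also have "\<dots> = 2^n * fact n * pf_expand A n (Suc ` {..<2*n})"
    by (simp add: pf_expand_strict_mono_image strict_mono_Suc_iff)
  finally have "pf_perm_sum n (\<lambda>u v. A (Suc u) (Suc v)) = 2^n * fact n * pf_expand A n (Suc ` {..<2*n})" .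
  then show ?thesis
    unfolding pfaffian_def pfaffian_sum_shift by (simp add: image_Suc_lessThan)
qed

section \<open>Schur's Pfaffian identity\<close>

definition schur_weight :: "('i \<Rightarrow> 'a::field) \<Rightarrow> 'i set \<Rightarrow> 'i \<Rightarrow> 'a" where
  "schur_weight y J j = (\<Prod>u\<in>J-{j}. (y j + y u) / (y j - y u))"

lemma degree_prod_linear:
  fixes a :: "'i \<Rightarrow> 'a::field"
  shows "degree (\<Prod>u\<in>S. [:a u, 1:]) = card S"
  by (subst degree_prod_eq_sum_degree) auto

lemma lead_coeff_prod_linear:
  fixes a :: "'i \<Rightarrow> 'a::field"
  shows "lead_coeff (\<Prod>u\<in>S. [:a u, 1:]) = 1"
  by (simp add: lead_coeff_prod)

text \<open>Both sides are monic polynomials of degree card J in x, and at each of the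
  points x = -y l all but one summand vanish.\<close>
lemma schur_weight_interpolation:
  fixes y :: "'i \<Rightarrow> 'a::field"
  assumes fin: "finite J" and inj: "inj_on y J"
  shows "(\<Sum>j\<in>J. schur_weight y J j * ((x - y j) * (\<Prod>u\<in>J-{j}. x + y u)))
           + (1 - (\<Sum>j\<in>J. schur_weight y J j)) * (\<Prod>u\<in>J. x + y u)
         = (\<Prod>u\<in>J. x - y u)"
proof -
  define G where "G = (\<Sum>j\<in>J. schur_weight y J j)"
  define r where "r = (\<lambda>j. [:- y j, 1:] * (\<Prod>u\<in>J-{j}. [:y u, 1:]))"
  define p where "p = (\<Sum>j\<in>J. Polynomial.smult (schur_weight y J j) (r j)) + Polynomial.smult (1 - G) (\<Prod>u\<in>J. [:y u, 1:])"
  define q where "q = (\<Prod>u\<in>J. [:- y u, 1:])"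
  have r: "degree (r j) = card J" "coeff (r j) (card J) = 1" if "j \<in> J" for j
  proof -
    have "(\<Prod>u\<in>J-{j}. [:y u, 1:]) \<noteq> 0"
      using lead_coeff_prod_linear[of y "J - {j}"] by auto
    then have "degree (r j) = Suc (card (J - {j}))"
      unfolding r_def by (subst degree_mult_eq) (auto simp: degree_prod_linear)
    moreover have "card J = Suc (card (J - {j}))" by (rule card_Suc_Diff1[symmetric, OF fin that])
    moreover have "lead_coeff (r j) = 1" unfolding r_def lead_coeff_mult lead_coeff_prod_linear by simp
    ultimately show "degree (r j) = card J" "coeff (r j) (card J) = 1" by simp_all
  qed
  have "degree p \<le> card J"
    unfolding p_def
  proof (rule degree_add_le)
    show "degree (\<Sum>j\<in>J. Polynomial.smult (schur_weight y J j) (r j)) \<le> card J"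
      by (rule degree_sum_le[OF fin], rule order.trans[OF degree_smult_le]) (simp add: r)
    show "degree (Polynomial.smult (1 - G) (\<Prod>u\<in>J. [:y u, 1:])) \<le> card J"
      by (rule order.trans[OF degree_smult_le]) (simp add: degree_prod_linear)
  qed
  moreover have "coeff p (card J) = 1"
    unfolding p_def using r degree_prod_linear[of y J] lead_coeff_prod_linear[of y J]
    by (simp add: coeff_sum G_def)
  moreover have "poly p (- y l) = poly q (- y l)" if l: "l \<in> J" for l
  proof -
    have "poly (\<Prod>u\<in>J-{j}. [:y u, 1:]) (- y l) = 0" if "j \<in> J" "j \<noteq> l" for j
      using that l fin by (auto simp: poly_prod intro!: prod_zero bexI[of _ l])
    then have "poly (r j) (- y l) = 0" if "j \<in> J" "j \<noteq> l" for j
      using that unfolding r_def poly_mult by simp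
    moreover have "poly (\<Prod>u\<in>J. [:y u, 1:]) (- y l) = 0"
      using l fin by (auto simp: poly_prod intro!: prod_zero bexI[of _ l])
    ultimately have "poly p (- y l) = schur_weight y J l * poly (r l) (- y l)"
      unfolding p_def using l fin by (simp add: poly_sum sum.remove[of J l])
    also have "\<dots> = (- 2 * y l) * (\<Prod>u\<in>J-{l}. (y l + y u) / (y l - y u) * (y u - y l))"
      by (simp add: schur_weight_def r_def poly_prod prod.distrib[symmetric])
    also have "\<dots> = (- 2 * y l) * (\<Prod>u\<in>J-{l}. - (y l + y u))"
    proof -
      have "y l - y u \<noteq> 0" if "u \<in> J - {l}" for u using inj l that by (auto dest: inj_onD)
      then show ?thesis by (intro arg_cong[where f = "(*) _"] prod.cong) (auto simp: field_simps)
    qed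
    also have "\<dots> = poly q (- y l)"
      unfolding q_def poly_prod using l fin
      by (subst prod.remove[of _ l]) (auto intro!: prod.cong simp: algebra_simps)
    finally show ?thesis .
  qed
  ultimately have "p = q"
    using inj degree_prod_linear[of "\<lambda>u. - y u" J] lead_coeff_prod_linear[of "\<lambda>u. - y u" J]
    by (intro poly_eqI_degree_lead_coeff[of p "card J" q "(\<lambda>u. - y u) ` J"])
       (auto simp: q_def card_image inj_on_def)
  then have "poly p x = poly q x" by simp
  moreover have "poly p x = (\<Sum>j\<in>J. schur_weight y J j * ((x - y j) * (\<Prod>u\<in>J-{j}. x + y u)))
           + (1 - G) * (\<Prod>u\<in>J. x + y u)"
    unfolding p_def r_def by (simp add: poly_sum poly_prod algebra_simps)
  moreover have "poly q x = (\<Prod>u\<in>J. x - y u)"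
    unfolding q_def by (simp add: poly_prod)
  ultimately show ?thesis unfolding G_def by simp
qed

lemma schur_weight_partial_fraction:
  fixes y :: "'i \<Rightarrow> 'a::field"
  assumes fin: "finite J" and inj: "inj_on y J"
    and nonzero: "\<And>j. j \<in> J \<Longrightarrow> x + y j \<noteq> 0"
  shows "(\<Sum>j\<in>J. schur_weight y J j * ((x - y j) / (x + y j))) + (1 - (\<Sum>j\<in>J. schur_weight y J j))
         = (\<Prod>j\<in>J. (x - y j) / (x + y j))"
proof -
  define G where "G = (\<Sum>j\<in>J. schur_weight y J j)"
  define H where "H = (\<Prod>u\<in>J. x + y u)"
  have "H \<noteq> 0" unfolding H_def using nonzero fin by auto
  have summand: "schur_weight y J j * ((x - y j) * (\<Prod>u\<in>J-{j}. x + y u))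
      = H * (schur_weight y J j * ((x - y j) / (x + y j)))" if "j \<in> J" for j
  proof -
    have "H = (x + y j) * (\<Prod>u\<in>J-{j}. x + y u)" unfolding H_def using that fin by (simp add: prod.remove)
    then show ?thesis using nonzero[OF that] by (simp add: field_simps)
  qed
  have "H * ((\<Sum>j\<in>J. schur_weight y J j * ((x - y j) / (x + y j))) + (1 - G))
      = (\<Sum>j\<in>J. schur_weight y J j * ((x - y j) * (\<Prod>u\<in>J-{j}. x + y u))) + (1 - G) * H"
    using summand by (simp add: distrib_left sum_distrib_left mult.commute cong: sum.cong)
  also have "\<dots> = (\<Prod>u\<in>J. x - y u)"
    unfolding G_def H_def by (rule schur_weight_interpolation[OF fin inj])
  also have "\<dots> = H * (\<Prod>j\<in>J. (x - y j) / (x + y j))"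
    unfolding H_def using nonzero by (simp add: prod.distrib[symmetric] cong: prod.cong)
  finally show ?thesis using \<open>H \<noteq> 0\<close> unfolding G_def by simp
qed

text \<open>Adding an index z and putting x = - y z multiplies each old weight by
  - (x - y j) / (x + y j) and makes the weight of z the full product, so the partial fraction
  identity turns the new sum of weights into 1 minus the old one.\<close>
lemma sum_schur_weight:
  fixes y :: "'i \<Rightarrow> 'a::field"
  assumes "finite J" "inj_on y J" "\<And>u v. u \<in> J \<Longrightarrow> v \<in> J \<Longrightarrow> u \<noteq> v \<Longrightarrow> y u + y v \<noteq> 0"
  shows "(\<Sum>j\<in>J. schur_weight y J j) = (if odd (card J) then 1 else 0)"
  using assms
proof (induction J rule: finite_induct)
  case (insert z J)
  have injJ: "inj_on y J" using insert.prems by (auto simp: inj_on_def)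
  have IH: "(\<Sum>j\<in>J. schur_weight y J j) = (if odd (card J) then 1 else 0)"
    using insert injJ by simp
  define x where "x = - y z"
  have ne: "y j \<noteq> y z" if "j \<in> J" for j
    using insert.prems(1) insert.hyps that by (auto simp: inj_on_def)
  have weight_j: "schur_weight y (insert z J) j = - (schur_weight y J j * ((x - y j) / (x + y j)))"
    if "j \<in> J" for j
  proof -
    have "insert z J - {j} = insert z (J - {j})" using that insert.hyps by auto
    then have "schur_weight y (insert z J) j = (y j + y z) / (y j - y z) * schur_weight y J j"
      unfolding schur_weight_def using insert.hyps by simp
    then show ?thesis using ne[OF that] by (simp add: x_def field_simps)
  qed
  have weight_z: "schur_weight y (insert z J) z = (\<Prod>j\<in>J. (x - y j) / (x + y j))"
  proof -
    have "insert z J - {z} = J" using insert.hyps by auto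
    moreover have "(y z + y j) / (y z - y j) = (x - y j) / (x + y j)" for j
    proof -
      have "x - y j = - (y z + y j)" "x + y j = - (y z - y j)" by (simp_all add: x_def)
      then show ?thesis by (simp only: minus_divide_divide)
    qed
    ultimately show ?thesis unfolding schur_weight_def by simp
  qed
  have "(\<Sum>j\<in>insert z J. schur_weight y (insert z J) j)
      = (\<Prod>j\<in>J. (x - y j) / (x + y j)) - (\<Sum>j\<in>J. schur_weight y J j * ((x - y j) / (x + y j)))"
    using insert.hyps weight_j weight_z by (simp add: sum_negf)
  also have "\<dots> = 1 - (\<Sum>j\<in>J. schur_weight y J j)"
    using schur_weight_partial_fraction[OF insert.hyps(1) injJ, of x] ne by (simp add: x_def algebra_simps)
  finally show ?case using IH insert.hyps by simp
qed simp

definition upper_prod :: "(nat \<Rightarrow> nat \<Rightarrow> 'a::comm_monoid_mult) \<Rightarrow> nat set \<Rightarrow> 'a" where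
  "upper_prod f I = (\<Prod>u\<in>I. \<Prod>v\<in>{v\<in>I. u<v}. f u v)"

lemma upper_prod_insert:
  assumes "finite U" "w \<notin> U"
  shows "upper_prod f (insert w U)
       = upper_prod f U * (\<Prod>u\<in>{u\<in>U. u<w}. f u w) * (\<Prod>v\<in>{v\<in>U. w<v}. f w v)"
proof -
  have row: "(\<Prod>v\<in>{v\<in>insert w U. u<v}. f u v) = (\<Prod>v\<in>{v\<in>U. u<v}. f u v) * (if u < w then f u w else 1)"
    if "u \<in> U" for u
  proof (cases "u < w")
    case True
    then have "{v\<in>insert w U. u<v} = insert w {v\<in>U. u<v}" by auto
    then show ?thesis using True assms by (simp add: ac_simps)
  next
    case False
    then have "{v\<in>insert w U. u<v} = {v\<in>U. u<v}" by auto
    then show ?thesis using False by simp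
  qed
  have "(\<Prod>u\<in>U. if u < w then f u w else 1) = (\<Prod>u\<in>{u\<in>U. u<w}. f u w)"
    using assms(1) by (simp add: prod.inter_filter)
  moreover have "{v\<in>insert w U. w<v} = {v\<in>U. w<v}" by auto
  ultimately show ?thesis
    unfolding upper_prod_def using assms row by (simp add: prod.distrib algebra_simps cong: prod.cong)
qed

lemma upper_prod_remove:
  fixes f :: "nat \<Rightarrow> nat \<Rightarrow> 'a::comm_ring_1"
  assumes skew: "\<And>u v. f u v = - f v u" and "finite J" "j \<in> J"
  shows "upper_prod f J = (-1) ^ card {z\<in>J. z<j} * upper_prod f (J - {j}) * (\<Prod>u\<in>J-{j}. f j u)"
proof -
  define Lo where "Lo = {u\<in>J-{j}. u<j}"
  define Hi where "Hi = {v\<in>J-{j}. j<v}"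
  have "J = insert j (J - {j})" using assms(3) by auto
  then have split_J: "upper_prod f J = upper_prod f (J - {j}) * (\<Prod>u\<in>Lo. f u j) * (\<Prod>v\<in>Hi. f j v)"
    unfolding Lo_def Hi_def using upper_prod_insert[of "J - {j}" j f] assms(2) by simp
  have "Lo = {z\<in>J. z<j}" unfolding Lo_def by auto
  then have lower: "(\<Prod>u\<in>Lo. f u j) = (-1) ^ card {z\<in>J. z<j} * (\<Prod>u\<in>Lo. f j u)"
    by (simp add: skew[of _ j] prod_uminus)
  have split_row: "J - {j} = Lo \<union> Hi" unfolding Lo_def Hi_def by auto
  have row: "(\<Prod>u\<in>J-{j}. f j u) = (\<Prod>u\<in>Lo. f j u) * (\<Prod>v\<in>Hi. f j v)"
    unfolding split_row by (rule prod.union_disjoint) (use assms(2) in \<open>auto simp: Lo_def Hi_def\<close>)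
  show ?thesis unfolding split_J lower row by (simp add: ac_simps)
qed

lemma schur_weight_mult_prod:
  fixes y :: "'i \<Rightarrow> 'a::field"
  assumes "inj_on y J" "\<And>u v. u \<in> J \<Longrightarrow> v \<in> J \<Longrightarrow> u \<noteq> v \<Longrightarrow> y u + y v \<noteq> 0" "j \<in> J"
  shows "schur_weight y J j * (\<Prod>u\<in>J-{j}. (y j - y u) / (y j + y u)) = 1"
proof -
  have cancel: "(y j + y u) / (y j - y u) * ((y j - y u) / (y j + y u)) = 1" if "u \<in> J - {j}" for u
  proof -
    have "y j \<noteq> y u" using assms(1,3) that by (auto dest: inj_onD)
    moreover have "y j + y u \<noteq> 0" using assms(2,3) that by auto
    ultimately show ?thesis by simp
  qed
  then show ?thesis unfolding schur_weight_def prod.distrib[symmetric] by (intro prod.neutral ballI cancel)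
qed

text \<open>Expanding along the smallest index i, the minors are known by induction, and the remaining
  sum over the partner j of i collapses by the partial fraction identity at x = q i, since the
  weights of the odd set I - {i} sum to 1.\<close>
theorem pf_expand_schur:
  fixes q x :: "nat \<Rightarrow> complex"
  assumes "finite I" "card I = 2*n" "inj_on q I"
    and "\<And>u v. u \<in> I \<Longrightarrow> v \<in> I \<Longrightarrow> u \<noteq> v \<Longrightarrow> q u + q v \<noteq> 0"
  shows "pf_expand (\<lambda>u v. x u * x v * ((q u - q v) / (q u + q v))) n I
         = (\<Prod>u\<in>I. x u) * upper_prod (\<lambda>u v. (q u - q v) / (q u + q v)) I"
  using assms
proof (induction n arbitrary: I)
  case 0
  then show ?case by (simp add: upper_prod_def)
next
  case (Suc n)
  define f where "f = (\<lambda>u v. (q u - q v) / (q u + q v))"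
  define D where "D = (\<lambda>u v. x u * x v * f u v)"
  define i where "i = Min I"
  define J where "J = I - {i}"
  have iI: "i \<in> I" unfolding i_def using Suc.prems by (intro Min_in) auto
  have imin: "i < u" if "u \<in> J" for u
  proof -
    have "i \<le> u" using that Suc.prems unfolding J_def i_def by simp
    then show ?thesis using that unfolding J_def by auto
  qed
  have IJ: "I = insert i J" "i \<notin> J" and finJ: "finite J" unfolding J_def using iI Suc.prems by auto
  have cardJ: "card J = Suc (2*n)" unfolding J_def using Suc.prems iI by simp
  have injJ: "inj_on q J" using Suc.prems(3) unfolding J_def by (rule inj_on_subset) auto
  have sumsJ: "\<And>u v. u \<in> J \<Longrightarrow> v \<in> J \<Longrightarrow> u \<noteq> v \<Longrightarrow> q u + q v \<noteq> 0"
    using Suc.prems(4) unfolding J_def by blast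
  have skew: "f u v = - f v u" for u v unfolding f_def by (simp add: add.commute minus_divide_left)
  have weights: "(\<Sum>j\<in>J. schur_weight q J j * f i j) = (\<Prod>j\<in>J. f i j)"
    using schur_weight_partial_fraction[OF finJ injJ, of "q i"] sum_schur_weight[OF finJ injJ sumsJ]
      cardJ Suc.prems(4) iI unfolding f_def J_def by auto
  have upper_I: "upper_prod f I = upper_prod f J * (\<Prod>v\<in>J. f i v)"
  proof -
    have lo: "{u\<in>J. u<i} = {}" and hi: "{v\<in>J. i<v} = J" using imin by force+
    show ?thesis unfolding IJ(1) upper_prod_insert[OF finJ IJ(2)] lo hi by simp
  qed
  have "pf_sign i j I * D i j * pf_expand D n (I - {i, j})
      = (\<Prod>u\<in>I. x u) * upper_prod f J * (schur_weight q J j * f i j)" if j: "j \<in> J" for j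
  proof -
    have sign: "pf_sign i j I = (-1) ^ card {z\<in>J. z<j}"
      using pf_sign_Min[OF Suc.prems(1), of j] j unfolding J_def i_def by simp
    have minor: "pf_expand D n (I - {i, j}) = (\<Prod>u\<in>J-{j}. x u) * upper_prod f (J - {j})"
    proof -
      have "I - {i, j} = J - {j}" unfolding J_def by auto
      moreover have "card (J - {j}) = 2 * n" using cardJ j finJ by simp
      ultimately show ?thesis
        using Suc.IH[of "J - {j}"] finJ injJ sumsJ unfolding D_def f_def by (auto intro: inj_on_subset)
    qed
    have upper_J: "upper_prod f J = (-1) ^ card {z\<in>J. z<j} * upper_prod f (J - {j}) * (\<Prod>u\<in>J-{j}. f j u)"
      by (rule upper_prod_remove[OF skew finJ j])
    have prod_x: "(\<Prod>u\<in>I. x u) = x i * (x j * (\<Prod>u\<in>J-{j}. x u))"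
      using IJ finJ j by (simp add: prod.remove)
    have "(\<Prod>u\<in>I. x u) * upper_prod f J * (schur_weight q J j * f i j)
        = pf_sign i j I * D i j * pf_expand D n (I - {i, j}) * (schur_weight q J j * (\<Prod>u\<in>J-{j}. f j u))"
      unfolding sign minor upper_J prod_x unfolding D_def by (simp add: algebra_simps)
    also have "schur_weight q J j * (\<Prod>u\<in>J-{j}. f j u) = 1"
      unfolding f_def by (rule schur_weight_mult_prod[OF injJ sumsJ j])
    finally show ?thesis by simp
  qed
  then have "pf_expand D (Suc n) I = (\<Sum>j\<in>J. (\<Prod>u\<in>I. x u) * upper_prod f J * (schur_weight q J j * f i j))"
    unfolding J_def i_def by simp
  also have "\<dots> = (\<Prod>u\<in>I. x u) * upper_prod f I"
    unfolding upper_I weights[symmetric] by (simp add: sum_distrib_left mult.assoc)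
  finally show ?case unfolding D_def f_def .
qed

section \<open>Perturbation by the pairing matrix\<close>

definition pair_block :: "nat \<Rightarrow> nat set" where
  "pair_block k = {2*k - 1, 2*k}"

definition blocks_within :: "nat set \<Rightarrow> nat set" where
  "blocks_within I = {k. 1 \<le> k \<and> pair_block k \<subseteq> I}"

lemma mem_pair_block_iff: "1 \<le> u \<Longrightarrow> u \<in> pair_block k \<longleftrightarrow> k = (u + 1) div 2"
  unfolding pair_block_def by auto

lemma pair_blocks_disjoint: "1 \<le> k \<Longrightarrow> 1 \<le> k' \<Longrightarrow> k \<noteq> k' \<Longrightarrow> pair_block k \<inter> pair_block k' = {}"
  by (auto simp: pair_block_def)

lemma card_pair_block: "1 \<le> k \<Longrightarrow> card (pair_block k) = 2"
  by (auto simp: pair_block_def)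

lemma finite_blocks_within:
  assumes "finite I"
  shows "finite (blocks_within I)"
proof (rule finite_subset)
  show "blocks_within I \<subseteq> {0..Max I}"
  proof
    fix k assume "k \<in> blocks_within I"
    then have "2*k \<in> I" by (auto simp: blocks_within_def pair_block_def)
    then have "2*k \<le> Max I" using assms by simp
    then show "k \<in> {0..Max I}" by simp
  qed
qed simp

lemma card_Union_pair_blocks:
  assumes "finite S" "S \<subseteq> {k. 1 \<le> k}"
  shows "card (\<Union>(pair_block ` S)) = 2 * card S"
proof -
  have "card (\<Union>(pair_block ` S)) = (\<Sum>k\<in>S. card (pair_block k))"
    by (rule card_UN_disjoint) (use assms pair_blocks_disjoint in \<open>auto simp: pair_block_def\<close>)
  also have "\<dots> = (\<Sum>k\<in>S. 2)" using assms card_pair_block by (intro sum.cong) auto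
  finally show ?thesis by simp
qed

lemma even_card_Union_pair_blocks_less:
  assumes "finite S" "S \<subseteq> {k. 1 \<le> k}" "j \<notin> \<Union>(pair_block ` S)"
  shows "even (card {z \<in> \<Union>(pair_block ` S). z < j})"
  using assms
proof (induction S rule: finite_induct)
  case (insert k S)
  have k: "1 \<le> k" "j \<noteq> 2*k - 1" "j \<noteq> 2*k" using insert.prems by (auto simp: pair_block_def)
  have IH: "even (card {z \<in> \<Union>(pair_block ` S). z < j})" using insert by auto
  have disj: "pair_block k \<inter> \<Union>(pair_block ` S) = {}" using pair_blocks_disjoint insert k by auto
  have split: "{z \<in> \<Union>(pair_block ` insert k S). z < j}
      = {z \<in> pair_block k. z < j} \<union> {z \<in> \<Union>(pair_block ` S). z < j}" by auto
  have fin: "finite (\<Union>(pair_block ` S))" using insert.hyps by (simp add: pair_block_def)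
  have "card {z \<in> \<Union>(pair_block ` insert k S). z < j}
      = card {z \<in> pair_block k. z < j} + card {z \<in> \<Union>(pair_block ` S). z < j}"
    unfolding split by (rule card_Un_disjoint) (use disj fin in \<open>auto simp: pair_block_def\<close>)
  moreover have "even (card {z \<in> pair_block k. z < j})"
  proof (cases "2*k < j")
    case True
    then have "{z \<in> pair_block k. z < j} = pair_block k" by (auto simp: pair_block_def)
    then show ?thesis using card_pair_block[OF k(1)] by simp
  next
    case False
    then have "{z \<in> pair_block k. z < j} = {}" using k by (auto simp: pair_block_def)
    then show ?thesis by (metis card.empty even_zero)
  qed
  ultimately show ?case using IH by simp
qed simp

text \<open>Removing whole blocks not containing i keeps i minimal, and it does not change the
  signs in the row of i because each removed block lies entirely below or above any j.\<close>
lemma pf_expand_diff_blocks: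
  assumes "finite I" "i = Min I" "S \<subseteq> blocks_within (I - {i})" "card I = 2 * Suc n"
  shows "pf_expand A (Suc n - card S) (I - \<Union>(pair_block ` S))
       = (\<Sum>j\<in>I-{i}-\<Union>(pair_block ` S).
            pf_sign i j I * A i j * pf_expand A (n - card S) (I - {i,j} - \<Union>(pair_block ` S)))"
proof -
  define U where "U = \<Union>(pair_block ` S)"
  have finS: "finite S" using assms(1,3) finite_blocks_within finite_subset by blast
  have S1: "S \<subseteq> {k. 1 \<le> k}" and Usub: "U \<subseteq> I - {i}"
    using assms(3) unfolding blocks_within_def U_def by auto
  have "I \<noteq> {}" using assms(4) by auto
  then have iI: "i \<in> I" and imin: "\<And>u. u \<in> I \<Longrightarrow> i \<le> u" using assms(1,2) by auto
  have "card (I - U) = 2 * Suc n - 2 * card S"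
    using Usub assms(1,4) card_Union_pair_blocks[OF finS S1] unfolding U_def[symmetric]
    by (subst card_Diff_subset) (auto intro: finite_subset)
  moreover have "card (I - U) > 0" using iI Usub assms(1) by (auto simp: card_gt_0_iff)
  ultimately have "Suc n - card S = Suc (n - card S)" by simp
  moreover have "Min (I - U) = i" using assms(1) iI Usub imin by (intro Min_eqI) auto
  moreover have "pf_sign i j (I - U) = pf_sign i j I" if j: "j \<in> I - {i} - U" for j
  proof (rule pf_sign_remove_even[OF assms(1)])
    show "U \<subseteq> I - {i, j}" using Usub j by auto
    have "{z \<in> U. z < i} = {}" using Usub imin by force
    then show "even (card {z \<in> U. z < i})" by (metis card.empty even_zero)
    show "even (card {z \<in> U. z < j})"
      unfolding U_def by (rule even_card_Union_pair_blocks_less[OF finS S1]) (use j U_def in simp)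
  qed
  moreover have "I - U - {i} = I - {i} - U" "\<And>j. I - U - {i, j} = I - {i,j} - U" by auto
  ultimately show ?thesis unfolding U_def[symmetric] by simp
qed

lemma sum_Pow_blocks_within_swap:
  fixes G :: "nat set \<Rightarrow> nat \<Rightarrow> complex"
  assumes "finite I"
  shows "(\<Sum>S\<in>Pow (blocks_within (I - {i})). \<Sum>j\<in>I-{i}-\<Union>(pair_block ` S). G S j)
       = (\<Sum>j\<in>I-{i}. \<Sum>S\<in>Pow (blocks_within (I - {i, j})). G S j)"
proof -
  define P where "P = blocks_within (I - {i})"
  have finP: "finite P" unfolding P_def using assms by (simp add: finite_blocks_within)
  have "(\<Sum>S\<in>Pow P. \<Sum>j\<in>I-{i}-\<Union>(pair_block ` S). G S j)
      = (\<Sum>S\<in>Pow P. \<Sum>j\<in>I-{i}. if j \<notin> \<Union>(pair_block ` S) then G S j else 0)"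
  proof (rule sum.cong[OF refl])
    fix S
    have e: "I - {i} - \<Union>(pair_block ` S) = {j \<in> I-{i}. j \<notin> \<Union>(pair_block ` S)}" by auto
    show "(\<Sum>j\<in>I-{i}-\<Union>(pair_block ` S). G S j)
        = (\<Sum>j\<in>I-{i}. if j \<notin> \<Union>(pair_block ` S) then G S j else 0)"
      unfolding e by (rule sum.inter_filter) (use assms in simp)
  qed
  also have "\<dots> = (\<Sum>j\<in>I-{i}. \<Sum>S\<in>Pow P. if j \<notin> \<Union>(pair_block ` S) then G S j else 0)"
    by (rule sum.swap)
  also have "\<dots> = (\<Sum>j\<in>I-{i}. \<Sum>S\<in>Pow (blocks_within (I - {i, j})). G S j)"
  proof (rule sum.cong[OF refl])
    fix j
    have e: "{S \<in> Pow P. j \<notin> \<Union>(pair_block ` S)} = Pow (blocks_within (I - {i, j}))"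
      unfolding P_def blocks_within_def by auto
    show "(\<Sum>S\<in>Pow P. if j \<notin> \<Union>(pair_block ` S) then G S j else 0)
        = (\<Sum>S\<in>Pow (blocks_within (I - {i, j})). G S j)"
      unfolding e[symmetric] by (rule sum.inter_filter[symmetric]) (use finP in simp)
  qed
  finally show ?thesis unfolding P_def .
qed

lemma sum_cconst_first_row:
  assumes "finite I" "i = Min I"
  shows "(\<Sum>j\<in>I-{i}. pf_sign i j I * cconst i j * X j) = (if odd i \<and> i + 1 \<in> I then X (i + 1) else 0)"
proof (cases "odd i \<and> i + 1 \<in> I")
  case True
  have "pf_sign i (i + 1) I = 1"
  proof -
    have "i \<le> z" if "z \<in> I" for z using assms that by simp
    then have empty: "{z\<in>I-{i}. z < i + 1} = {}" by force
    have "pf_sign i (i + 1) I = (-1) ^ card {z\<in>I-{i}. z < i + 1}"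
      using pf_sign_Min[OF assms(1), of "i + 1"] True assms(2) by simp
    then show ?thesis unfolding empty by simp
  qed
  moreover have "(\<Sum>j\<in>I-{i}-{i+1}. pf_sign i j I * cconst i j * X j) = 0"
    by (rule sum.neutral) (auto simp: cconst_def)
  ultimately show ?thesis
    using True assms(1) by (simp add: sum.remove[of "I-{i}" "i+1"] cconst_def)
next
  case False
  then have "(\<Sum>j\<in>I-{i}. pf_sign i j I * cconst i j * X j) = 0"
    by (intro sum.neutral) (auto simp: cconst_def)
  then show ?thesis using False by auto
qed

lemma blocks_within_Min_unpaired:
  assumes "finite I" "i = Min I" "\<not> (odd i \<and> i + 1 \<in> I)"
  shows "blocks_within I = blocks_within (I - {i})"
proof -
  have "i \<notin> pair_block k" if "1 \<le> k" "pair_block k \<subseteq> I" for k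
  proof
    assume "i \<in> pair_block k"
    then consider "i = 2*k - 1" | "i = 2*k" by (auto simp: pair_block_def)
    then show False
    proof cases
      case 1
      then show False using assms that by (auto simp: pair_block_def)
    next
      case 2
      then have "2*k - 1 \<in> I" using that by (auto simp: pair_block_def)
      then have "i \<le> 2*k - 1" using assms(1,2) by simp
      then show False using 2 that by simp
    qed
  qed
  then show ?thesis unfolding blocks_within_def by blast
qed

lemma blocks_within_Min_paired:
  assumes "finite I" "i = Min I" "odd i" "i + 1 \<in> I"
  defines "k \<equiv> (i + 1) div 2"
  shows "pair_block k = {i, i + 1}"
    and "blocks_within I = insert k (blocks_within (I - {i}))"
    and "k \<notin> blocks_within (I - {i})"
    and "blocks_within (I - {i, i + 1}) = blocks_within (I - {i})"
proof -
  have k: "2 * k = i + 1" "2 * k - 1 = i" "1 \<le> k" using assms(3) unfolding k_def by presburger+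
  show block: "pair_block k = {i, i + 1}" unfolding pair_block_def using k by auto
  have "I \<noteq> {}" using assms(4) by auto
  then have iI: "i \<in> I" using assms(1,2) by simp
  have other: "k' = k" if "1 \<le> k'" "i \<in> pair_block k' \<or> i + 1 \<in> pair_block k'" for k'
    using that k by (auto simp: pair_block_def)
  show "blocks_within I = insert k (blocks_within (I - {i}))"
  proof (intro equalityI subsetI)
    fix k' assume "k' \<in> blocks_within I"
    then show "k' \<in> insert k (blocks_within (I - {i}))"
      using other[of k'] unfolding blocks_within_def by blast
  next
    fix k' assume "k' \<in> insert k (blocks_within (I - {i}))"
    then show "k' \<in> blocks_within I"
      using block iI assms(4) k(3) unfolding blocks_within_def by auto
  qed
  show "k \<notin> blocks_within (I - {i})" using block unfolding blocks_within_def by blast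
  show "blocks_within (I - {i, i + 1}) = blocks_within (I - {i})"
  proof (intro equalityI subsetI)
    fix k' assume k': "k' \<in> blocks_within (I - {i})"
    then have "i + 1 \<notin> pair_block k'"
      using other[of k'] block unfolding blocks_within_def by blast
    then show "k' \<in> blocks_within (I - {i, i + 1})"
      using k' unfolding blocks_within_def by blast
  qed (auto simp: blocks_within_def)
qed

lemma sum_Pow_insert:
  assumes "finite P" "k \<notin> P"
  shows "(\<Sum>S\<in>Pow (insert k P). F S) = (\<Sum>S\<in>Pow P. F S) + (\<Sum>S\<in>Pow P. F (insert k S))"
proof -
  have "inj_on (insert k) (Pow P)" using assms(2) by (auto intro!: inj_onI)
  moreover have "Pow P \<inter> insert k ` Pow P = {}" using assms(2) by auto
  ultimately show ?thesis
    unfolding Pow_insert using assms(1) by (simp add: sum.union_disjoint sum.reindex)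
qed

lemma sum_Pow_blocks_within_Min:
  assumes "finite I" "i = Min I"
  shows "(\<Sum>S\<in>Pow (blocks_within I). F S)
       = (\<Sum>S\<in>Pow (blocks_within (I - {i})). F S)
         + (if odd i \<and> i + 1 \<in> I
            then (\<Sum>S\<in>Pow (blocks_within (I - {i, i + 1})). F (insert ((i + 1) div 2) S)) else 0)"
proof (cases "odd i \<and> i + 1 \<in> I")
  case True
  note paired = blocks_within_Min_paired[OF assms True[THEN conjunct1] True[THEN conjunct2]]
  have fin: "finite (blocks_within (I - {i}))" using assms(1) by (simp add: finite_blocks_within)
  show ?thesis
    unfolding paired(2) paired(4) sum_Pow_insert[OF fin paired(3)] using True by simp
next
  case False
  then show ?thesis using blocks_within_Min_unpaired[OF assms False] by auto
qed

text \<open>In the expansion along the smallest index i, the constant part contributes only the term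
  with the partner i + 1 of i in its block; that term accounts for the sets S containing this block.\<close>
theorem pf_expand_add_cconst:
  assumes "finite I" "card I = 2*n"
  shows "pf_expand (\<lambda>u v. A u v + cconst u v) n I
       = (\<Sum>S\<in>Pow (blocks_within I). pf_expand A (n - card S) (I - \<Union>(pair_block ` S)))"
  using assms
proof (induction n arbitrary: I)
  case 0
  then have "I = {}" by simp
  moreover have "blocks_within {} = {}" by (auto simp: blocks_within_def pair_block_def)
  ultimately show ?case by simp
next
  case (Suc n)
  define B where "B = (\<lambda>u v. A u v + cconst u v)"
  define i where "i = Min I"
  define P where "P = blocks_within (I - {i})"
  define F where "F = (\<lambda>S. pf_expand A (Suc n - card S) (I - \<Union>(pair_block ` S)))"
  have finP: "finite P" unfolding P_def using Suc.prems by (simp add: finite_blocks_within)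
  have iI: "i \<in> I" unfolding i_def using Suc.prems by (intro Min_in) auto
  have IH: "pf_expand B n (I - {i,j})
      = (\<Sum>S\<in>Pow (blocks_within (I - {i,j})). pf_expand A (n - card S) (I - {i,j} - \<Union>(pair_block ` S)))"
    if "j \<in> I - {i}" for j
  proof -
    have "card (I - {i,j}) = 2 * n"
      using that Suc.prems iI by (subst card_Diff_subset) auto
    then show ?thesis using Suc.IH[of "I - {i,j}"] Suc.prems unfolding B_def by simp
  qed
  have part_A: "(\<Sum>j\<in>I-{i}. pf_sign i j I * A i j * pf_expand B n (I - {i,j})) = (\<Sum>S\<in>Pow P. F S)"
  proof -
    have "(\<Sum>j\<in>I-{i}. pf_sign i j I * A i j * pf_expand B n (I - {i,j}))
        = (\<Sum>j\<in>I-{i}. \<Sum>S\<in>Pow (blocks_within (I - {i,j})).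
             pf_sign i j I * A i j * pf_expand A (n - card S) (I - {i,j} - \<Union>(pair_block ` S)))"
      by (intro sum.cong refl) (simp add: IH sum_distrib_left)
    also have "\<dots> = (\<Sum>S\<in>Pow P. \<Sum>j\<in>I-{i}-\<Union>(pair_block ` S).
             pf_sign i j I * A i j * pf_expand A (n - card S) (I - {i,j} - \<Union>(pair_block ` S)))"
      unfolding P_def using Suc.prems(1) by (rule sum_Pow_blocks_within_swap[symmetric])
    also have "\<dots> = (\<Sum>S\<in>Pow P. F S)"
      unfolding F_def P_def i_def using Suc.prems
      by (intro sum.cong refl pf_expand_diff_blocks[symmetric]) auto
    finally show ?thesis .
  qed
  have part_C: "(\<Sum>j\<in>I-{i}. pf_sign i j I * cconst i j * pf_expand B n (I - {i,j}))
      = (if odd i \<and> i + 1 \<in> I then pf_expand B n (I - {i, i + 1}) else 0)"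
    by (rule sum_cconst_first_row) (use Suc.prems in \<open>simp_all add: i_def\<close>)
  have "(\<Sum>S\<in>Pow (blocks_within (I - {i, i + 1})). F (insert ((i + 1) div 2) S))
      = pf_expand B n (I - {i, i + 1})" if C: "odd i" "i + 1 \<in> I"
  proof -
    note paired = blocks_within_Min_paired[OF Suc.prems(1) i_def C]
    have "F (insert ((i + 1) div 2) S) = pf_expand A (n - card S) (I - {i, i + 1} - \<Union>(pair_block ` S))"
      if "S \<in> Pow (blocks_within (I - {i, i + 1}))" for S
    proof -
      have "finite S" "(i + 1) div 2 \<notin> S"
        using that finP paired(3,4) unfolding P_def by (auto intro: finite_subset)
      moreover have "I - \<Union>(pair_block ` insert ((i + 1) div 2) S) = I - {i, i + 1} - \<Union>(pair_block ` S)"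
        using paired(1) by auto
      ultimately show ?thesis unfolding F_def by simp
    qed
    then have "(\<Sum>S\<in>Pow (blocks_within (I - {i, i + 1})). F (insert ((i + 1) div 2) S))
        = (\<Sum>S\<in>Pow (blocks_within (I - {i, i + 1})).
             pf_expand A (n - card S) (I - {i, i + 1} - \<Union>(pair_block ` S)))"
      by (rule sum.cong[OF refl])
    then show ?thesis using IH[of "i + 1"] C by simp
  qed
  then have "(\<Sum>S\<in>Pow (blocks_within I). F S)
      = (\<Sum>S\<in>Pow P. F S) + (if odd i \<and> i + 1 \<in> I then pf_expand B n (I - {i, i + 1}) else 0)"
    unfolding P_def sum_Pow_blocks_within_Min[OF Suc.prems(1) i_def] by auto
  moreover have "pf_expand B (Suc n) I
      = (\<Sum>j\<in>I-{i}. pf_sign i j I * A i j * pf_expand B n (I - {i,j}))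
        + (\<Sum>j\<in>I-{i}. pf_sign i j I * cconst i j * pf_expand B n (I - {i,j}))"
    by (simp add: i_def B_def algebra_simps sum.distrib)
  ultimately show ?case unfolding B_def[symmetric] F_def[symmetric] part_A part_C by simp
qed

section \<open>The Prym theta sum\<close>

lemma blocks_within_interval: "blocks_within {1..2*g} = {1..g}"
  unfolding blocks_within_def pair_block_def by auto

lemma mem_Union_pair_blocks_iff: "1 \<le> u \<Longrightarrow> u \<in> \<Union>(pair_block ` S) \<longleftrightarrow> (u + 1) div 2 \<in> S"
  using mem_pair_block_iff by auto

lemma interval_diff_pair_blocks:
  assumes "S \<subseteq> {1..g}"
  shows "{1..2*g} - \<Union>(pair_block ` S) = \<Union>(pair_block ` ({1..g} - S))"
proof (intro equalityI subsetI)
  fix u assume u: "u \<in> {1..2*g} - \<Union>(pair_block ` S)"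
  then have "1 \<le> u" "(u + 1) div 2 \<in> {1..g}" by auto
  then show "u \<in> \<Union>(pair_block ` ({1..g} - S))"
    using u mem_Union_pair_blocks_iff[of u] by auto
next
  fix u assume "u \<in> \<Union>(pair_block ` ({1..g} - S))"
  then obtain k where k: "k \<in> {1..g} - S" "u \<in> pair_block k" by auto
  then have "1 \<le> u" "u \<le> 2*g" unfolding pair_block_def by auto
  moreover have "(u + 1) div 2 = k" using mem_pair_block_iff[of u k] k \<open>1 \<le> u\<close> by simp
  ultimately show "u \<in> {1..2*g} - \<Union>(pair_block ` S)"
    using mem_Union_pair_blocks_iff[of u S] k by auto
qed

lemma prod_Union_pair_blocks:
  assumes "finite T" "T \<subseteq> {k. 1 \<le> k}"
  shows "(\<Prod>u\<in>\<Union>(pair_block ` T). x u) = (\<Prod>k\<in>T. \<Prod>u\<in>pair_block k. x u)"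
  by (rule prod.UNION_disjoint) (use assms pair_blocks_disjoint in \<open>auto simp: pair_block_def\<close>)

lemma prod_pair_block: "1 \<le> k \<Longrightarrow> (\<Prod>u\<in>pair_block k. x u) = x (2*k - 1) * x (2*k)"
  by (simp add: pair_block_def)

lemma upper_prod_Union_pair_blocks:
  fixes f :: "nat \<Rightarrow> nat \<Rightarrow> 'a::comm_monoid_mult"
  assumes finT: "finite T" and T1: "T \<subseteq> {k. 1 \<le> k}"
  shows "upper_prod f (\<Union>(pair_block ` T))
       = (\<Prod>k\<in>T. f (2*k - 1) (2*k)) *
         upper_prod (\<lambda>j k. f (2*j - 1) (2*k - 1) * f (2*j - 1) (2*k) * f (2*j) (2*k - 1) * f (2*j) (2*k)) T"
proof -
  define U where "U = \<Union>(pair_block ` T)"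
  define G where "G = (\<lambda>u v. if u < v then f u v else 1)"
  define Q where "Q = (\<lambda>j k. \<Prod>u\<in>pair_block j. \<Prod>v\<in>pair_block k. G u v)"
  define cross where "cross = (\<lambda>j k. f (2*j - 1) (2*k - 1) * f (2*j - 1) (2*k) * f (2*j) (2*k - 1) * f (2*j) (2*k))"
  have finU: "finite U" unfolding U_def using finT by (simp add: pair_block_def)
  have "upper_prod f U = (\<Prod>u\<in>U. \<Prod>v\<in>U. G u v)"
    unfolding upper_prod_def G_def
  proof (rule prod.cong[OF refl])
    fix u
    show "(\<Prod>v\<in>{v\<in>U. u<v}. f u v) = (\<Prod>v\<in>U. if u < v then f u v else 1)"
      by (rule prod.inter_filter[OF finU])
  qed
  also have "\<dots> = (\<Prod>j\<in>T. \<Prod>u\<in>pair_block j. \<Prod>k\<in>T. \<Prod>v\<in>pair_block k. G u v)"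
    unfolding U_def prod_Union_pair_blocks[OF finT T1] ..
  also have "\<dots> = (\<Prod>j\<in>T. \<Prod>k\<in>T. Q j k)"
    unfolding Q_def by (rule prod.cong[OF refl], rule prod.swap)
  also have "\<dots> = (\<Prod>j\<in>T. f (2*j - 1) (2*j) * (\<Prod>k\<in>{k\<in>T. j<k}. cross j k))"
  proof (rule prod.cong[OF refl])
    fix j assume j: "j \<in> T"
    then have j1: "1 \<le> j" using T1 by auto
    have "Q j k = (if j < k then cross j k else 1)" if k: "k \<in> T - {j}" for k
    proof -
      have k1: "1 \<le> k" using k T1 by auto
      show ?thesis
      proof (cases "j < k")
        case True
        then have "2*j-1 < 2*k-1" "2*j-1 < 2*k" "2*j < 2*k-1" "2*j < 2*k" using j1 by auto
        then show ?thesis unfolding Q_def G_def cross_def using j1 k1 True by (simp add: prod_pair_block mult.assoc)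
      next
        case False
        then have "k < j" using k by auto
        then have "\<not> 2*j-1 < 2*k-1" "\<not> 2*j-1 < 2*k" "\<not> 2*j < 2*k-1" "\<not> 2*j < 2*k" using k1 by auto
        then show ?thesis unfolding Q_def G_def cross_def using j1 k1 False by (simp add: prod_pair_block)
      qed
    qed
    then have "(\<Prod>k\<in>T-{j}. Q j k) = (\<Prod>k\<in>T-{j}. if j < k then cross j k else 1)"
      by (rule prod.cong[OF refl])
    also have "\<dots> = (\<Prod>k\<in>{k\<in>T-{j}. j<k}. cross j k)"
      by (rule prod.inter_filter[symmetric]) (use finT in simp)
    also have "{k\<in>T-{j}. j<k} = {k\<in>T. j<k}" by auto
    finally have "(\<Prod>k\<in>T-{j}. Q j k) = (\<Prod>k\<in>{k\<in>T. j<k}. cross j k)" .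
    moreover have "Q j j = f (2*j - 1) (2*j)"
    proof -
      have "2*j - 1 < 2*j" "\<not> 2*j < 2*j - 1" using j1 by auto
      then show ?thesis unfolding Q_def G_def using j1 by (simp add: prod_pair_block)
    qed
    ultimately show "(\<Prod>k\<in>T. Q j k) = f (2*j - 1) (2*j) * (\<Prod>k\<in>{k\<in>T. j<k}. cross j k)"
      using j finT by (simp add: prod.remove)
  qed
  finally show ?thesis unfolding U_def upper_prod_def cross_def by (simp add: prod.distrib)
qed

lemma sum_Pow_complement:
  assumes "finite G"
  shows "(\<Sum>S\<in>Pow G. F (G - S)) = (\<Sum>T\<in>Pow G. F T)"
  by (rule sum.reindex_bij_witness[where i="\<lambda>S. G - S" and j="\<lambda>S. G - S"]) auto

lemma sum_binary_vectors_eq_sum_subsets: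
  fixes C :: "nat \<Rightarrow> nat \<Rightarrow> 'a::comm_semiring_1" and w :: "nat \<Rightarrow> 'a"
  assumes fin: "finite G"
  shows "(\<Sum>m \<in> G \<rightarrow>\<^sub>E {0, 1}.
            (\<Prod>(j, k) \<in> {(j, k). j \<in> G \<and> k \<in> G \<and> j < k}. C j k ^ (m j * m k)) * (\<Prod>k\<in>G. w k ^ m k))
       = (\<Sum>T\<in>Pow G. (\<Prod>k\<in>T. w k) * upper_prod C T)"
proof (rule sum.reindex_bij_witness[where j="\<lambda>m. {k\<in>G. m k = 1}"
      and i="\<lambda>T k. if k \<in> G then (if k \<in> T then 1 else 0) else undefined"])
  fix m :: "nat \<Rightarrow> nat" assume m: "m \<in> G \<rightarrow>\<^sub>E {0, 1}"
  define T where "T = {k\<in>G. m k = 1}"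
  have mT: "m k = (if k \<in> T then 1 else 0)" if "k \<in> G" for k
    using m that unfolding T_def by auto
  show "(\<lambda>k. if k \<in> G then (if k \<in> {k\<in>G. m k = 1} then 1 else 0) else undefined) = m"
  proof
    fix k
    show "(if k \<in> G then (if k \<in> {k\<in>G. m k = 1} then 1 else 0) else undefined) = m k"
      using m mT[of k] unfolding T_def by (cases "k \<in> G") auto
  qed
  show "{k\<in>G. m k = 1} \<in> Pow G" by auto
  have "(\<Prod>k\<in>G. w k ^ m k) = (\<Prod>k\<in>G. if k \<in> T then w k else 1)"
    using mT by (intro prod.cong) auto
  also have "\<dots> = (\<Prod>k\<in>T. w k)"
    using fin by (simp add: prod.inter_filter[symmetric] T_def Collect_conj_eq)
  finally have prod_w: "(\<Prod>k\<in>G. w k ^ m k) = (\<Prod>k\<in>T. w k)" .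
  have "(\<Prod>(j, k) \<in> {(j, k). j \<in> G \<and> k \<in> G \<and> j < k}. C j k ^ (m j * m k))
      = (\<Prod>j\<in>G. \<Prod>k\<in>{k\<in>G. j<k}. C j k ^ (m j * m k))"
  proof -
    have "{(j, k). j \<in> G \<and> k \<in> G \<and> j < k} = (SIGMA j:G. {k\<in>G. j<k})" by auto
    then show ?thesis using fin by (simp add: prod.Sigma)
  qed
  also have "\<dots> = (\<Prod>j\<in>G. if j \<in> T then (\<Prod>k\<in>{k\<in>T. j<k}. C j k) else 1)"
  proof (rule prod.cong[OF refl])
    fix j assume j: "j \<in> G"
    have "(\<Prod>k\<in>{k\<in>G. j<k}. C j k ^ (m j * m k)) = (\<Prod>k\<in>{k\<in>G. j<k}. if j \<in> T \<and> k \<in> T then C j k else 1)"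
      using j mT by (intro prod.cong) auto
    also have "\<dots> = (if j \<in> T then (\<Prod>k\<in>{k\<in>T. j<k}. C j k) else 1)"
    proof (cases "j \<in> T")
      case True
      have "(\<Prod>k\<in>{k\<in>G. j<k}. if j \<in> T \<and> k \<in> T then C j k else 1)
          = (\<Prod>k\<in>{k\<in>G. j<k}. if k \<in> T then C j k else 1)"
        using True by simp
      also have "\<dots> = (\<Prod>k\<in>{k \<in> {k\<in>G. j<k}. k \<in> T}. C j k)"
        by (rule prod.inter_filter[symmetric]) (use fin in simp)
      also have "{k \<in> {k\<in>G. j<k}. k \<in> T} = {k\<in>T. j<k}" unfolding T_def by auto
      finally show ?thesis using True by (simp only: True if_True simp_thms)
    qed simp
    finally show "(\<Prod>k\<in>{k\<in>G. j<k}. C j k ^ (m j * m k)) = (if j \<in> T then (\<Prod>k\<in>{k\<in>T. j<k}. C j k) else 1)" .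
  qed
  also have "\<dots> = upper_prod C T"
    using fin unfolding upper_prod_def by (simp add: prod.inter_filter[symmetric] T_def Collect_conj_eq)
  finally show "(\<Prod>k\<in>{k\<in>G. m k = 1}. w k) * upper_prod C {k\<in>G. m k = 1}
      = (\<Prod>(j, k) \<in> {(j, k). j \<in> G \<and> k \<in> G \<and> j < k}. C j k ^ (m j * m k)) * (\<Prod>k\<in>G. w k ^ m k)"
    unfolding prod_w T_def by (simp add: mult.commute)
next
  fix T assume "T \<in> Pow G"
  then show "{k\<in>G. (if k \<in> G then (if k \<in> T then 1 else 0) else undefined) = (1::nat)} = T"
    and "(\<lambda>k. if k \<in> G then (if k \<in> T then 1 else 0) else undefined) \<in> G \<rightarrow>\<^sub>E {0, 1}"
    by auto
qed

lemma skew_from_upper_skew: "skew_from_upper E u v = - skew_from_upper E v u"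
  unfolding skew_from_upper_def by auto

lemma upper_prod_cong:
  assumes "\<And>j k. j \<in> T \<Longrightarrow> k \<in> T \<Longrightarrow> j < k \<Longrightarrow> f j k = f' j k"
  shows "upper_prod f T = upper_prod f' T"
  unfolding upper_prod_def using assms by (intro prod.cong) auto

lemma qseq_odd: "1 \<le> k \<Longrightarrow> qseq b c (2*k - 1) = b k"
  unfolding qseq_def by (simp add: odd_pos)

lemma qseq_even: "qseq b c (2*k) = - c k"
  unfolding qseq_def by simp

lemma qseq_parity:
  assumes "1 \<le> u"
  shows "qseq b c u = (if odd u then b ((u + 1) div 2) else - c ((u + 1) div 2))"
  unfolding qseq_def by auto

lemma qseq_distinct_sum_nonzero:
  assumes A1: "\<And>j k. j \<in> {1..g} \<Longrightarrow> k \<in> {1..g} \<Longrightarrow> j \<noteq> k \<Longrightarrow>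
             b j - b k \<noteq> 0 \<and> b j + b k \<noteq> 0 \<and> c j - c k \<noteq> 0 \<and> c j + c k \<noteq> 0"
      and A2: "\<And>j k. j \<in> {1..g} \<Longrightarrow> k \<in> {1..g} \<Longrightarrow> b j - c k \<noteq> 0 \<and> b j + c k \<noteq> 0"
      and uv: "u \<in> {1..2*g}" "v \<in> {1..2*g}" "u \<noteq> v"
  shows "qseq b c u \<noteq> qseq b c v \<and> qseq b c u + qseq b c v \<noteq> 0"
proof -
  define j where "j = (u + 1) div 2"
  define k where "k = (v + 1) div 2"
  have jk: "j \<in> {1..g}" "k \<in> {1..g}" using uv unfolding j_def k_def by auto
  have same_parity: "j \<noteq> k" if "odd u \<longleftrightarrow> odd v"
    using that uv unfolding j_def k_def by auto presburger
  have q: "qseq b c u = (if odd u then b j else - c j)" "qseq b c v = (if odd v then b k else - c k)"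
    using qseq_parity[of u b c] qseq_parity[of v b c] uv unfolding j_def k_def by auto
  show ?thesis
  proof (cases "odd u"; cases "odd v")
    assume "odd u" "odd v"
    then have "qseq b c u = b j" "qseq b c v = b k" "j \<noteq> k" using q same_parity by auto
    then show ?thesis using A1[OF jk] by auto
  next
    assume "odd u" "\<not> odd v"
    then have "qseq b c u = b j" "qseq b c v = - c k" using q by auto
    then show ?thesis using A2[OF jk] by (metis add_uminus_conv_diff diff_minus_eq_add eq_iff_diff_eq_0)
  next
    assume "\<not> odd u" "odd v"
    then have "qseq b c u = - c j" "qseq b c v = b k" using q by auto
    then show ?thesis using A2[OF jk(2,1)]
      by (metis add.commute add_uminus_conv_diff diff_minus_eq_add eq_iff_diff_eq_0)
  next
    assume "\<not> odd u" "\<not> odd v"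
    then have "qseq b c u = - c j" "qseq b c v = - c k" "j \<noteq> k" using q same_parity by auto
    then show ?thesis using A1[OF jk]
      by (metis add.inverse_distrib_swap minus_diff_eq neg_equal_iff_equal eq_iff_diff_eq_0
          neg_0_equal_iff_equal add.commute)
  qed
qed

lemma pf_expand_pair_blocks_theta:
  fixes b c \<xi> :: "nat \<Rightarrow> complex"
  assumes A1: "\<And>j k. j \<in> {1..g} \<Longrightarrow> k \<in> {1..g} \<Longrightarrow> j \<noteq> k \<Longrightarrow>
             b j - b k \<noteq> 0 \<and> b j + b k \<noteq> 0 \<and> c j - c k \<noteq> 0 \<and> c j + c k \<noteq> 0"
      and A2: "\<And>j k. j \<in> {1..g} \<Longrightarrow> k \<in> {1..g} \<Longrightarrow> b j - c k \<noteq> 0 \<and> b j + c k \<noteq> 0"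
      and T: "T \<subseteq> {1..g}"
  shows "pf_expand (\<lambda>u v. (qseq b c u - qseq b c v) / (qseq b c u + qseq b c v) * exp (\<xi> u + \<xi> v))
           (card T) (\<Union>(pair_block ` T))
       = (\<Prod>k\<in>T. exp (\<xi> (2*k - 1) + \<xi> (2*k)) * (b k + c k) / (b k - c k)) * upper_prod (CB b c) T"
proof -
  define q where "q = qseq b c"
  define x where "x = (\<lambda>u. exp (\<xi> u))"
  define f where "f = (\<lambda>u v. (q u - q v) / (q u + q v))"
  define U where "U = \<Union>(pair_block ` T)"
  have finT: "finite T" and T1: "T \<subseteq> {k. 1 \<le> k}" using T finite_subset by auto
  have U: "U \<subseteq> {1..2*g}"
  proof
    fix u assume "u \<in> U"
    then obtain k where k: "k \<in> T" "u \<in> pair_block k" unfolding U_def by auto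
    then have "1 \<le> k" "k \<le> g" using T by auto
    then show "u \<in> {1..2*g}" using k by (auto simp: pair_block_def)
  qed
  have q_values: "q (2*k - 1) = b k" "q (2*k) = - c k" if "k \<in> T" for k
    using that T1 qseq_odd[of k b c] qseq_even[of b c k] unfolding q_def by auto
  have "pf_expand (\<lambda>u v. x u * x v * f u v) (card T) U = (\<Prod>u\<in>U. x u) * upper_prod f U"
    unfolding f_def
  proof (rule pf_expand_schur)
    show "finite U" "card U = 2 * card T"
      unfolding U_def using finT T1 card_Union_pair_blocks by (auto simp: pair_block_def)
    show "inj_on q U" "\<And>u v. u \<in> U \<Longrightarrow> v \<in> U \<Longrightarrow> u \<noteq> v \<Longrightarrow> q u + q v \<noteq> 0"
      using qseq_distinct_sum_nonzero[where g = g and b = b and c = c, OF A1 A2] U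
      unfolding q_def inj_on_def by blast+
  qed
  also have "\<dots> = (\<Prod>k\<in>T. x (2*k - 1) * x (2*k) * f (2*k - 1) (2*k)) *
      upper_prod (\<lambda>j k. f (2*j - 1) (2*k - 1) * f (2*j - 1) (2*k) * f (2*j) (2*k - 1) * f (2*j) (2*k)) T"
  proof -
    have "(\<Prod>u\<in>U. x u) = (\<Prod>k\<in>T. x (2*k - 1) * x (2*k))"
      unfolding U_def prod_Union_pair_blocks[OF finT T1]
      using T1 by (intro prod.cong refl) (auto simp: prod_pair_block)
    then show ?thesis
      unfolding U_def upper_prod_Union_pair_blocks[OF finT T1] by (simp add: prod.distrib ac_simps)
  qed
  also have "\<dots> = (\<Prod>k\<in>T. exp (\<xi> (2*k - 1) + \<xi> (2*k)) * (b k + c k) / (b k - c k)) * upper_prod (CB b c) T"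
  proof -
    have "x (2*k - 1) * x (2*k) * f (2*k - 1) (2*k) = exp (\<xi> (2*k - 1) + \<xi> (2*k)) * (b k + c k) / (b k - c k)"
      if "k \<in> T" for k
      using q_values[OF that] unfolding x_def f_def by (simp add: exp_add)
    moreover have "f (2*j - 1) (2*k - 1) * f (2*j - 1) (2*k) * f (2*j) (2*k - 1) * f (2*j) (2*k) = CB b c j k"
      if "j \<in> T" "k \<in> T" for j k
    proof -
      have "f (2*j - 1) (2*k - 1) * f (2*j - 1) (2*k) * f (2*j) (2*k - 1) * f (2*j) (2*k)
          = (b j - b k) / (b j + b k) * ((b j + c k) / (b j - c k)) * ((c j + b k) / (c j - b k))
            * ((c j - c k) / (c j + c k))"
      proof -
        have e: "- c j - b k = - (c j + b k)" "- c j + b k = - (c j - b k)"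
             "- c j - - c k = - (c j - c k)" "- c j + - c k = - (c j + c k)"
             "b j - - c k = b j + c k" "b j + - c k = b j - c k" by simp_all
        show ?thesis
          unfolding f_def q_values[OF that(1)] q_values[OF that(2)] e minus_divide_divide ..
      qed
      also have "\<dots> = CB b c j k"
        unfolding CB_def times_divide_times_eq by (simp only: ac_simps)
      finally show ?thesis .
    qed
    ultimately show ?thesis by (simp cong: prod.cong upper_prod_cong)
  qed
  moreover have "(\<lambda>u v. (qseq b c u - qseq b c v) / (qseq b c u + qseq b c v) * exp (\<xi> u + \<xi> v))
      = (\<lambda>u v. x u * x v * f u v)"
    unfolding x_def f_def q_def by (intro ext) (simp add: exp_add ac_simps)
  ultimately show ?thesis unfolding U_def by simp
qed

theorem mainTheorem3:
  fixes g :: nat and b c :: "nat \<Rightarrow> complex" and \<xi> :: "nat \<Rightarrow> complex"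
  assumes "\<And>j k. j \<in> {1..g} \<Longrightarrow> k \<in> {1..g} \<Longrightarrow> j \<noteq> k \<Longrightarrow>
             b j - b k \<noteq> 0 \<and> b j + b k \<noteq> 0 \<and> c j - c k \<noteq> 0 \<and> c j + c k \<noteq> 0"
      and "\<And>j k. j \<in> {1..g} \<Longrightarrow> k \<in> {1..g} \<Longrightarrow> b j - c k \<noteq> 0 \<and> b j + c k \<noteq> 0"
  shows "(\<Sum>m \<in> {1..g} \<rightarrow>\<^sub>E {0, 1}.
            (\<Prod>(j, k) \<in> {(j, k). 1 \<le> j \<and> j < k \<and> k \<le> g}. CB b c j k ^ (m j * m k)) *
            (\<Prod>k = 1..g. (exp (\<xi> (2*k - 1) + \<xi> (2*k)) * (b k + c k) / (b k - c k)) ^ m k))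
       = pfaffian g (skew_from_upper (\<lambda>j k. cconst j k +
            (qseq b c j - qseq b c k) / (qseq b c j + qseq b c k) * exp (\<xi> j + \<xi> k)))"
proof -
  define D where "D = (\<lambda>u v. (qseq b c u - qseq b c v) / (qseq b c u + qseq b c v) * exp (\<xi> u + \<xi> v))"
  define w where "w = (\<lambda>k. exp (\<xi> (2*k - 1) + \<xi> (2*k)) * (b k + c k) / (b k - c k))"
  define G where "G = {1..g}"
  have "pfaffian g (skew_from_upper (\<lambda>j k. cconst j k + D j k))
      = pf_expand (\<lambda>u v. D u v + cconst u v) g {1..2*g}"
    unfolding pfaffian_eq_pf_expand[OF skew_from_upper_skew]
    by (rule pf_expand_cong_upper) (simp_all add: skew_from_upper_def)
  also have "\<dots> = (\<Sum>S\<in>Pow (blocks_within {1..2*g}). pf_expand D (g - card S) ({1..2*g} - \<Union>(pair_block ` S)))"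
    by (rule pf_expand_add_cconst) simp_all
  also have "\<dots> = (\<Sum>S\<in>Pow G. pf_expand D (card (G - S)) (\<Union>(pair_block ` (G - S))))"
    unfolding blocks_within_interval G_def
  proof (intro sum.cong refl)
    fix S assume "S \<in> Pow {1..g}"
    then have S: "S \<subseteq> {1..g}" by simp
    then show "pf_expand D (g - card S) ({1..2*g} - \<Union>(pair_block ` S))
        = pf_expand D (card ({1..g} - S)) (\<Union>(pair_block ` ({1..g} - S)))"
      unfolding interval_diff_pair_blocks[OF S] by (simp add: card_Diff_subset finite_subset)
  qed
  also have "\<dots> = (\<Sum>S\<in>Pow G. (\<Prod>k\<in>G - S. w k) * upper_prod (CB b c) (G - S))"
    unfolding D_def w_def G_def using pf_expand_pair_blocks_theta[OF assms] by (intro sum.cong) auto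
  also have "\<dots> = (\<Sum>T\<in>Pow G. (\<Prod>k\<in>T. w k) * upper_prod (CB b c) T)"
    by (rule sum_Pow_complement) (simp add: G_def)
  also have "\<dots> = (\<Sum>m \<in> G \<rightarrow>\<^sub>E {0, 1}.
      (\<Prod>(j, k) \<in> {(j, k). j \<in> G \<and> k \<in> G \<and> j < k}. CB b c j k ^ (m j * m k)) * (\<Prod>k\<in>G. w k ^ m k))"
    by (rule sum_binary_vectors_eq_sum_subsets[symmetric]) (simp add: G_def)
  also have "{(j, k). j \<in> G \<and> k \<in> G \<and> j < k} = {(j, k). 1 \<le> j \<and> j < k \<and> k \<le> g}"
    unfolding G_def by auto
  finally show ?thesis unfolding D_def w_def G_def by simp
qed

end
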